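(* Let $n\ge3$, $K\ge1$, and $\underline a=(a_1,\dots,a_K)\in(\mathbb{C}^\times)^K$ with $a_k\neq a_j^{\pm1}$ for all $k\neq j$. If $a_1=1$ and $a_k\neq-1$ for every $k\ge2$, then the image of $\psi_{\underline a}$ is isomorphic to the direct sum of one copy of $sp_{2n}$ and $K-1$ copies of $sl_{2n}$.
   Context: For $n\geq 3$, $M_n=(m_{i,j})$ is the $n\times n$ integer matrix with $m_{i,i}=2$, $m_{i,i+1}=m_{i+1,i}=-1$ ($1\le i\le n-1$), $m_{1,n}=m_{n,1}=1$, all other entries $0$. $\mathrm{gim}(M_n)$ is the complex Lie algebra generated by $e_i,f_i,h_i$ ($1\le i\le n$) with relations: (R1) $[h_i,e_j]=m_{i,j}e_j$, $[h_i,f_j]=-m_{i,j}f_j$, $[e_i,f_i]=h_i$ for all $i,j$; (R2) for $i\ne j$ with $m_{i,j}\le0$: $[e_i,f_j]=0=[f_i,e_j]$, $(\mathrm{ad}\,e_i)^{1-m_{i,j}}e_j=0=(\mathrm{ad}\,f_i)^{1-m_{i,j}}f_j$; (R3) for $i\ne j$ with $m_{i,j}>0$: $[e_i,e_j]=0=[f_i,f_j]$, $(\mathrm{ad}\,e_i)^{m_{i,j}+1}f_j=0=(\mathrm{ad}\,f_i)^{m_{i,j}+1}e_j$. For $a\in\mathbb{C}^\times$, $\psi_a:\mathrm{gim}(M_n)\to sl_{2n}$ is the Lie algebra homomorphism determined by $\psi_a(e_i)=E_{i,i+1}-E_{n+i+1,n+i}$, $\psi_a(f_i)=E_{i+1,i}-E_{n+i,n+i+1}$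 ($1\le i\le n-1$), $\psi_a(e_n)=E_{n,n+1}+a^{-1}E_{1,2n}$, $\psi_a(f_n)=E_{n+1,n}+aE_{2n,1}$, where $E_{i,j}$ are matrix units. For $\underline a=(a_1,\dots,a_K)$, $\psi_{\underline a}=\bigoplus_{k=1}^K\psi_{a_k}:\mathrm{gim}(M_n)\to sl_{2n}^{\oplus K}$, $x\mapsto(\psi_{a_1}(x),\dots,\psi_{a_K}(x))$. *)

theory Defs
  imports Complex_Main
begin

text \<open>Complex matrices with 1-based indices; an n x n matrix is a function
  nat => nat => complex vanishing outside {1..n} x {1..n}.
  An element of a K-fold direct sum of matrix algebras is a function
  nat => (nat => nat => complex), indexed by k in {1..K}, zero outside.\<close>

type_synonym cmat = "nat \<Rightarrow> nat \<Rightarrow> complex"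
type_synonym cmats = "nat \<Rightarrow> cmat"

definition Eu :: "nat \<Rightarrow> nat \<Rightarrow> cmat" where
  "Eu p q = (\<lambda>i j. if i = p \<and> j = q then 1 else 0)"

definition madd :: "cmat \<Rightarrow> cmat \<Rightarrow> cmat" where
  "madd X Y = (\<lambda>i j. X i j + Y i j)"

definition mscal :: "complex \<Rightarrow> cmat \<Rightarrow> cmat" where
  "mscal c X = (\<lambda>i j. c * X i j)"

text \<open>The images of the Chevalley generators under psi_a (in sl_{2n}).\<close>
definition psi_e :: "nat \<Rightarrow> complex \<Rightarrow> nat \<Rightarrow> cmat" where
  "psi_e n a i = (if i < n then madd (Eu i (i+1)) (mscal (-1) (Eu (n+i+1) (n+i)))
                 else madd (Eu n (n+1)) (mscal (inverse a) (Eu 1 (2*n))))"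

definition psi_f :: "nat \<Rightarrow> complex \<Rightarrow> nat \<Rightarrow> cmat" where
  "psi_f n a i = (if i < n then madd (Eu (i+1) i) (mscal (-1) (Eu (n+i) (n+i+1)))
                 else madd (Eu (n+1) n) (mscal a (Eu (2*n) 1)))"

definition psiv_e :: "nat \<Rightarrow> nat \<Rightarrow> (nat \<Rightarrow> complex) \<Rightarrow> nat \<Rightarrow> cmats" where
  "psiv_e n K a i = (\<lambda>k. if 1 \<le> k \<and> k \<le> K then psi_e n (a k) i else (\<lambda>_ _. 0))"

definition psiv_f :: "nat \<Rightarrow> nat \<Rightarrow> (nat \<Rightarrow> complex) \<Rightarrow> nat \<Rightarrow> cmats" where
  "psiv_f n K a i = (\<lambda>k. if 1 \<le> k \<and> k \<le> K then psi_f n (a k) i else (\<lambda>_ _. 0))"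

definition vadd :: "cmats \<Rightarrow> cmats \<Rightarrow> cmats" where
  "vadd X Y = (\<lambda>k i j. X k i j + Y k i j)"

definition vscal :: "complex \<Rightarrow> cmats \<Rightarrow> cmats" where
  "vscal c X = (\<lambda>k i j. c * X k i j)"

definition vbr :: "nat \<Rightarrow> cmats \<Rightarrow> cmats \<Rightarrow> cmats" where
  "vbr N X Y = (\<lambda>k i j. (\<Sum>l\<in>{1..N}. X k i l * Y k l j - Y k i l * X k l j))"

inductive_set lie_gen :: "nat \<Rightarrow> cmats set \<Rightarrow> cmats set" for N G where
  gen: "x \<in> G \<Longrightarrow> x \<in> lie_gen N G"
| zero: "(\<lambda>k i j. 0) \<in> lie_gen N G"
| add: "x \<in> lie_gen N G \<Longrightarrow> y \<in> lie_gen N G \<Longrightarrow> vadd x y \<in> lie_gen N G"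
| scal: "x \<in> lie_gen N G \<Longrightarrow> vscal c x \<in> lie_gen N G"
| br: "x \<in> lie_gen N G \<Longrightarrow> y \<in> lie_gen N G \<Longrightarrow> vbr N x y \<in> lie_gen N G"

text \<open>Image of psi_{a}: since gim(M_n) is generated by the e_i, f_i, h_i
  (with h_i = [e_i,f_i]) and psi_{a} is a Lie algebra homomorphism, its image is
  the Lie subalgebra generated by the images of the generators.\<close>
definition psi_image :: "nat \<Rightarrow> nat \<Rightarrow> (nat \<Rightarrow> complex) \<Rightarrow> cmats set" where
  "psi_image n K a = lie_gen (2*n)
     (\<Union>i\<in>{1..n}. {psiv_e n K a i, psiv_f n K a i,
                   vbr (2*n) (psiv_e n K a i) (psiv_f n K a i)})"

definition supp_ok :: "nat \<Rightarrow> cmat \<Rightarrow> bool" where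
  "supp_ok N X = (\<forall>i j. (i \<notin> {1..N} \<or> j \<notin> {1..N}) \<longrightarrow> X i j = 0)"

definition is_sl :: "nat \<Rightarrow> cmat \<Rightarrow> bool" where
  "is_sl N X = (supp_ok N X \<and> (\<Sum>i\<in>{1..N}. X i i) = 0)"

definition Jsym :: "nat \<Rightarrow> cmat" where
  "Jsym n = (\<lambda>i j. if 1 \<le> i \<and> i \<le> n \<and> j = i + n then 1
                  else if n < i \<and> i \<le> 2*n \<and> i = j + n then -1 else 0)"

definition is_sp :: "nat \<Rightarrow> cmat \<Rightarrow> bool" where
  "is_sp n X = (supp_ok (2*n) X \<and>
     (\<forall>i\<in>{1..2*n}. \<forall>j\<in>{1..2*n}.
        (\<Sum>l\<in>{1..2*n}. X l i * Jsym n l j + Jsym n i l * X l j) = 0))"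

definition sp_sl_sum :: "nat \<Rightarrow> nat \<Rightarrow> cmats set" where
  "sp_sl_sum n K = {X. (\<forall>k. k \<notin> {1..K} \<longrightarrow> X k = (\<lambda>_ _. 0)) \<and> is_sp n (X 1) \<and>
                       (\<forall>k\<in>{2..K}. is_sl (2*n) (X k))}"

definition lie_iso :: "nat \<Rightarrow> cmats set \<Rightarrow> cmats set \<Rightarrow> (cmats \<Rightarrow> cmats) \<Rightarrow> bool" where
  "lie_iso N S T f = (bij_betw f S T \<and>
     (\<forall>x\<in>S. \<forall>y\<in>S. f (vadd x y) = vadd (f x) (f y) \<and> f (vbr N x y) = vbr N (f x) (f y)) \<and>
     (\<forall>c. \<forall>x\<in>S. f (vscal c x) = vscal c (f x)))"

end

theory Submission
  imports Defs
begin

text \<open>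
  The generators lie in sp(2n) + sl(2n)^(K-1), hence so does the image; the work is the
  converse inclusion, one component at a time.

  For i < n the generators equal E(i,i+1) - E(n+i+1,n+i) in every component, so the image
  contains the diagonal copy of gl(n), embedded as X \<mapsto> diag(X, -X^T).  Bracketing it
  with e_n and f_n gives in component k the element l_k (E(1,1) - E(n+1,n+1)) with
  l_k = -(2 + a_k + 1/a_k), and the l_k are pairwise distinct because a_k \<noteq> a_j^(+-1).
  A Lagrange interpolation polynomial in the adjoint action of this element therefore
  isolates E(1,2) - E(n+2,n+1) in a single component, and from there the diagonal gl(n)
  spreads it over the whole embedded gl(n) of that component.  One more bracket with
  e_n, f_n gives the symmetric off-diagonal blocks of sp(2n) when a_k = 1, and when
  a_k \<noteq> +-1 the matrix unit E(2,n+1) with coefficient 1 - a_k^(-2), which generates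
  all of sl(2n).  So the image equals sp(2n) + sl(2n)^(K-1) and the identity is the
  required isomorphism.
\<close>

definition mbr :: "nat \<Rightarrow> cmat \<Rightarrow> cmat \<Rightarrow> cmat" where
  "mbr N X Y = (\<lambda>i j. (\<Sum>l\<in>{1..N}. X i l * Y l j - Y i l * X l j))"

definition mzero :: cmat where "mzero = (\<lambda>_ _. 0)"

definition msum :: "('b \<Rightarrow> cmat) \<Rightarrow> 'b set \<Rightarrow> cmat" where
  "msum F A = (\<lambda>i j. \<Sum>x\<in>A. F x i j)"

lemma vbr_apply: "vbr N X Y k = mbr N (X k) (Y k)"
  by (simp add: vbr_def mbr_def)

lemma vadd_apply: "vadd X Y k = madd (X k) (Y k)"
  by (simp add: vadd_def madd_def)

lemma vscal_apply: "vscal c X k = mscal c (X k)"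
  by (simp add: vscal_def mscal_def)

lemma mscal_mzero [simp]: "mscal c mzero = mzero"
  by (simp add: mscal_def mzero_def)

lemma madd_mzero_right [simp]: "madd X mzero = X"
  by (simp add: madd_def mzero_def)

lemma madd_mzero_left [simp]: "madd mzero X = X"
  by (simp add: madd_def mzero_def)

lemma mbr_Eu_left:
  assumes "p \<in> {1..N}" "q \<in> {1..N}"
  shows "mbr N (Eu p q) Y = (\<lambda>i j. (if i = p then Y q j else 0) - (if j = q then Y i p else 0))"
proof (intro ext)
  fix i j
  have "(\<Sum>l\<in>{1..N}. Eu p q i l * Y l j - Y i l * Eu p q l j)
     = (\<Sum>l\<in>{1..N}. (if l = q then (if i = p then Y q j else 0) else 0)) -
       (\<Sum>l\<in>{1..N}. (if l = p then (if j = q then Y i p else 0) else 0))"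
    unfolding sum_subtractf[symmetric] by (rule sum.cong) (auto simp: Eu_def)
  also have "\<dots> = (if i = p then Y q j else 0) - (if j = q then Y i p else 0)"
    using assms by (simp add: sum.delta)
  finally show "mbr N (Eu p q) Y i j = (if i = p then Y q j else 0) - (if j = q then Y i p else 0)"
    by (simp add: mbr_def)
qed

lemma mbr_antisym: "mbr N Y X = mscal (-1) (mbr N X Y)"
  unfolding mbr_def mscal_def by (intro ext) (simp add: sum_negf[symmetric])

lemma mbr_Eu_right:
  assumes "p \<in> {1..N}" "q \<in> {1..N}"
  shows "mbr N X (Eu p q) = (\<lambda>i j. (if j = q then X i p else 0) - (if i = p then X q j else 0))"
  by (subst mbr_antisym) (auto simp: mbr_Eu_left[OF assms] mscal_def)

lemma mbr_madd_left: "mbr N (madd X Y) Z = madd (mbr N X Z) (mbr N Y Z)"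
  by (auto simp: mbr_def madd_def sum.distrib[symmetric] algebra_simps intro!: ext sum.cong)

lemma mbr_mscal_left: "mbr N (mscal c X) Z = mscal c (mbr N X Z)"
  by (auto simp: mbr_def mscal_def sum_distrib_left algebra_simps intro!: ext sum.cong)

lemma mbr_mscal_right: "mbr N Z (mscal c X) = mscal c (mbr N Z X)"
  by (auto simp: mbr_def mscal_def sum_distrib_left algebra_simps intro!: ext sum.cong)

lemma mbr_zero_left: "mbr N mzero X = mzero"
  by (simp add: mbr_def mzero_def)

lemma mbr_Eu_Eu:
  assumes "p \<in> {1..N}" "q \<in> {1..N}" "r \<in> {1..N}" "s \<in> {1..N}"
  shows "mbr N (Eu p q) (Eu r s) =
    madd (if q = r then Eu p s else mzero) (mscal (-1) (if s = p then Eu r q else mzero))"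
  using assms unfolding mbr_Eu_left[OF assms(1,2)]
  by (intro ext) (simp add: Eu_def madd_def mscal_def mzero_def)

lemma sum_Eu_entries:
  assumes "finite A"
  shows "(\<Sum>x\<in>A. c x * Eu (fst x) (snd x) i j) = (if (i, j) \<in> A then c (i, j) else 0)"
proof -
  have "(\<Sum>x\<in>A. c x * Eu (fst x) (snd x) i j) = (\<Sum>x\<in>A. if x = (i, j) then c (i, j) else 0)"
    by (rule sum.cong) (auto simp: Eu_def)
  then show ?thesis using assms by (simp add: sum.delta')
qed

lemma sl_of_zero_diag: "supp_ok N X \<Longrightarrow> (\<And>l. X l l = 0) \<Longrightarrow> is_sl N X"
  by (simp add: is_sl_def)

lemma supp_ok_madd: "supp_ok N X \<Longrightarrow> supp_ok N Y \<Longrightarrow> supp_ok N (madd X Y)"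
  by (simp add: supp_ok_def madd_def)

lemma supp_ok_mscal: "supp_ok N X \<Longrightarrow> supp_ok N (mscal c X)"
  by (simp add: supp_ok_def mscal_def)

lemma supp_ok_mbr: "supp_ok N X \<Longrightarrow> supp_ok N Y \<Longrightarrow> supp_ok N (mbr N X Y)"
  unfolding supp_ok_def mbr_def
proof (intro allI impI)
  fix i j assume X: "\<forall>i j. (i \<notin> {1..N} \<or> j \<notin> {1..N}) \<longrightarrow> X i j = 0"
    and Y: "\<forall>i j. (i \<notin> {1..N} \<or> j \<notin> {1..N}) \<longrightarrow> Y i j = 0"
    and o: "i \<notin> {1..N} \<or> j \<notin> {1..N}"
  show "(\<Sum>l\<in>{1..N}. X i l * Y l j - Y i l * X l j) = 0"
    by (rule sum.neutral) (use X Y o in auto)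
qed

lemma sl_madd: "is_sl N X \<Longrightarrow> is_sl N Y \<Longrightarrow> is_sl N (madd X Y)"
  unfolding is_sl_def using supp_ok_madd by (simp add: madd_def sum.distrib)

lemma sl_mscal: "is_sl N X \<Longrightarrow> is_sl N (mscal c X)"
  unfolding is_sl_def using supp_ok_mscal by (simp add: mscal_def sum_distrib_left[symmetric])

lemma sl_mbr: "is_sl N X \<Longrightarrow> is_sl N Y \<Longrightarrow> is_sl N (mbr N X Y)"
proof -
  assume "is_sl N X" "is_sl N Y"
  then have s: "supp_ok N (mbr N X Y)" by (simp add: is_sl_def supp_ok_mbr)
  have "(\<Sum>i\<in>{1..N}. mbr N X Y i i) = (\<Sum>i\<in>{1..N}. \<Sum>l\<in>{1..N}. X i l * Y l i) - (\<Sum>i\<in>{1..N}. \<Sum>l\<in>{1..N}. Y i l * X l i)"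
    by (simp add: mbr_def sum_subtractf)
  also have "(\<Sum>i\<in>{1..N}. \<Sum>l\<in>{1..N}. Y i l * X l i) = (\<Sum>i\<in>{1..N}. \<Sum>l\<in>{1..N}. X i l * Y l i)"
    by (subst sum.swap) (simp add: mult.commute)
  finally show ?thesis using s by (simp add: is_sl_def)
qed

definition pswap :: "nat \<Rightarrow> nat \<Rightarrow> nat" where
  "pswap n x = (if x \<le> n then x + n else x - n)"

definition psign :: "nat \<Rightarrow> nat \<Rightarrow> complex" where
  "psign n x = (if x \<le> n then 1 else -1)"

lemma pswap_range: "x \<in> {1..2*n} \<Longrightarrow> pswap n x \<in> {1..2*n}" by (auto simp: pswap_def)

lemma pswap_pswap: "x \<in> {1..2*n} \<Longrightarrow> pswap n (pswap n x) = x" by (auto simp: pswap_def)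

lemma psign_pswap: "x \<in> {1..2*n} \<Longrightarrow> psign n (pswap n x) = - psign n x" by (auto simp: pswap_def psign_def)

lemma psign_square: "psign n x * psign n x = 1" by (simp add: psign_def)

lemma sum_mult_Jsym:
  assumes "j \<in> {1..2*n}"
  shows "(\<Sum>l\<in>{1..2*n}. X l i * Jsym n l j) = - psign n j * X (pswap n j) i"
proof -
  have "(\<Sum>l\<in>{1..2*n}. X l i * Jsym n l j) = (\<Sum>l\<in>{1..2*n}. if l = pswap n j then - psign n j * X (pswap n j) i else 0)"
    by (rule sum.cong) (use assms in \<open>auto simp: Jsym_def pswap_def psign_def\<close>)
  also have "\<dots> = - psign n j * X (pswap n j) i" using pswap_range[OF assms] by (simp add: sum.delta)
  finally show ?thesis .
qed

lemma sum_Jsym_mult: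
  assumes "i \<in> {1..2*n}"
  shows "(\<Sum>l\<in>{1..2*n}. Jsym n i l * X l j) = psign n i * X (pswap n i) j"
proof -
  have "(\<Sum>l\<in>{1..2*n}. Jsym n i l * X l j) = (\<Sum>l\<in>{1..2*n}. if l = pswap n i then psign n i * X (pswap n i) j else 0)"
    by (rule sum.cong) (use assms in \<open>auto simp: Jsym_def pswap_def psign_def\<close>)
  also have "\<dots> = psign n i * X (pswap n i) j" using pswap_range[OF assms] by (simp add: sum.delta)
  finally show ?thesis .
qed

text \<open>Multiplication by \<open>Jsym n\<close> permutes rows and columns by \<open>pswap n\<close> up to the signs
  \<open>psign n\<close>, so the defining equation of \<open>sp\<close> becomes a symmetry of the entries.\<close>

lemma sp_char: "is_sp n X \<longleftrightarrow> supp_ok (2*n) X \<and>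
   (\<forall>i\<in>{1..2*n}. \<forall>j\<in>{1..2*n}. psign n i * X (pswap n i) j = psign n j * X (pswap n j) i)"
proof -
  have "(\<Sum>l\<in>{1..2*n}. X l i * Jsym n l j + Jsym n i l * X l j) = psign n i * X (pswap n i) j - psign n j * X (pswap n j) i"
    if "i \<in> {1..2*n}" "j \<in> {1..2*n}" for i j
    using sum_mult_Jsym[OF that(2), of X i] sum_Jsym_mult[OF that(1), of X j] by (simp add: sum.distrib)
  then show ?thesis unfolding is_sp_def by (auto simp: right_minus_eq)
qed

lemma sp_entry_reflect:
  assumes "is_sp n M" "i \<in> {1..2*n}" "j \<in> {1..2*n}"
  shows "M i j = - (psign n i * psign n j) * M (pswap n j) (pswap n i)"
proof -
  have "psign n (pswap n i) * M (pswap n (pswap n i)) j = psign n j * M (pswap n j) (pswap n i)"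
    using assms pswap_range[OF assms(2)] unfolding sp_char by blast
  then have "- psign n i * M i j = psign n j * M (pswap n j) (pswap n i)"
    using pswap_pswap[OF assms(2)] psign_pswap[OF assms(2)] by simp
  then have "psign n i * M i j = - (psign n j * M (pswap n j) (pswap n i))"
    by (metis minus_minus mult_minus_left)
  moreover have "M i j = psign n i * (psign n i * M i j)"
    using psign_square[of n i] by (simp add: mult.assoc[symmetric])
  ultimately show ?thesis by simp
qed

lemma pswap_eq: "a\<in>{1..2*n} \<Longrightarrow> b\<in>{1..2*n} \<Longrightarrow> (pswap n a = b) = (a = pswap n b)"
  by (auto simp: pswap_def)

lemma pswap_inj: "a\<in>{1..2*n} \<Longrightarrow> b\<in>{1..2*n} \<Longrightarrow> (pswap n a = pswap n b) = (a = b)"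
  by (auto simp: pswap_def)

lemma sp_madd: "is_sp n X \<Longrightarrow> is_sp n Y \<Longrightarrow> is_sp n (madd X Y)"
  unfolding sp_char using supp_ok_madd by (simp add: madd_def distrib_left)

lemma sp_mscal: "is_sp n X \<Longrightarrow> is_sp n (mscal c X)"
  unfolding sp_char using supp_ok_mscal by (simp add: mscal_def mult.left_commute)

lemma sum_pswap: "(\<Sum>l\<in>{1..2*n}. f l) = (\<Sum>l\<in>{1..2*n}. f (pswap n l))"
  by (rule sum.reindex_bij_witness[of _ "pswap n" "pswap n"]) (auto simp: pswap_def)

lemma sp_product_reflect:
  assumes X: "is_sp n X" and Y: "is_sp n Y" and i: "i\<in>{1..2*n}" and j: "j\<in>{1..2*n}"
  shows "psign n i * (\<Sum>l\<in>{1..2*n}. X (pswap n i) l * Y l j) = - psign n j * (\<Sum>l\<in>{1..2*n}. Y (pswap n j) l * X l i)"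
proof -
  have cX: "\<And>a b. a\<in>{1..2*n} \<Longrightarrow> b\<in>{1..2*n} \<Longrightarrow> psign n a * X (pswap n a) b = psign n b * X (pswap n b) a"
    using X unfolding sp_char by blast
  have cY: "\<And>a b. a\<in>{1..2*n} \<Longrightarrow> b\<in>{1..2*n} \<Longrightarrow> psign n a * Y (pswap n a) b = psign n b * Y (pswap n b) a"
    using Y unfolding sp_char by blast
  have "psign n i * (\<Sum>l\<in>{1..2*n}. X (pswap n i) l * Y l j) = (\<Sum>l\<in>{1..2*n}. (psign n i * X (pswap n i) l) * Y l j)"
    by (simp add: sum_distrib_left mult.assoc)
  also have "\<dots> = (\<Sum>l\<in>{1..2*n}. psign n l * X (pswap n l) i * Y l j)"
    by (rule sum.cong) (use cX i in auto)
  also have "\<dots> = (\<Sum>l\<in>{1..2*n}. psign n (pswap n l) * X (pswap n (pswap n l)) i * Y (pswap n l) j)"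
    by (rule sum_pswap)
  also have "\<dots> = (\<Sum>l\<in>{1..2*n}. - (X l i * (psign n l * Y (pswap n l) j)))"
    by (rule sum.cong) (auto simp: pswap_pswap psign_pswap)
  also have "\<dots> = (\<Sum>l\<in>{1..2*n}. - (X l i * (psign n j * Y (pswap n j) l)))"
    by (rule sum.cong) (use cY j in auto)
  also have "\<dots> = - psign n j * (\<Sum>l\<in>{1..2*n}. Y (pswap n j) l * X l i)"
    by (simp add: sum_distrib_left sum_negf algebra_simps)
  finally show ?thesis .
qed

lemma sp_mbr: "is_sp n X \<Longrightarrow> is_sp n Y \<Longrightarrow> is_sp n (mbr (2*n) X Y)"
proof -
  assume X: "is_sp n X" and Y: "is_sp n Y"
  have s: "supp_ok (2*n) (mbr (2*n) X Y)" using X Y unfolding sp_char by (simp add: supp_ok_mbr)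
  have "psign n i * mbr (2*n) X Y (pswap n i) j = psign n j * mbr (2*n) X Y (pswap n j) i"
    if i: "i\<in>{1..2*n}" and j: "j\<in>{1..2*n}" for i j
  proof -
    have e: "\<And>a b. mbr (2*n) X Y a b = (\<Sum>l\<in>{1..2*n}. X a l * Y l b) - (\<Sum>l\<in>{1..2*n}. Y a l * X l b)"
      by (simp add: mbr_def sum_subtractf)
    have "psign n i * mbr (2*n) X Y (pswap n i) j =
        psign n i * (\<Sum>l\<in>{1..2*n}. X (pswap n i) l * Y l j) - psign n i * (\<Sum>l\<in>{1..2*n}. Y (pswap n i) l * X l j)"
      unfolding e by (simp add: right_diff_distrib)
    also have "\<dots> = - psign n j * (\<Sum>l\<in>{1..2*n}. Y (pswap n j) l * X l i) + psign n j * (\<Sum>l\<in>{1..2*n}. X (pswap n j) l * Y l i)"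
      unfolding sp_product_reflect[OF X Y i j] sp_product_reflect[OF Y X i j] by simp
    also have "\<dots> = psign n j * mbr (2*n) X Y (pswap n j) i"
      unfolding e by (simp add: algebra_simps)
    finally show ?thesis .
  qed
  then show ?thesis using s unfolding sp_char by blast
qed

lemma sp_sl_sum_zero: "(\<lambda>k i j. 0) \<in> sp_sl_sum n K"
  by (auto simp: sp_sl_sum_def sp_char is_sl_def supp_ok_def)

lemma sp_sl_sum_vadd: "x \<in> sp_sl_sum n K \<Longrightarrow> y \<in> sp_sl_sum n K \<Longrightarrow> vadd x y \<in> sp_sl_sum n K"
proof -
  assume x: "x \<in> sp_sl_sum n K" and y: "y \<in> sp_sl_sum n K"
  have "is_sp n (madd (x 1) (y 1))" using x y by (intro sp_madd) (simp_all add: sp_sl_sum_def)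
  moreover have "\<forall>k\<in>{2..K}. is_sl (2*n) (madd (x k) (y k))" using x y by (auto intro!: sl_madd simp: sp_sl_sum_def)
  moreover have "\<forall>k. k \<notin> {1..K} \<longrightarrow> vadd x y k = (\<lambda>_ _. 0)" using x y by (auto simp: sp_sl_sum_def vadd_def)
  ultimately show ?thesis by (simp add: sp_sl_sum_def vadd_apply)
qed

lemma sp_sl_sum_vscal: "x \<in> sp_sl_sum n K \<Longrightarrow> vscal c x \<in> sp_sl_sum n K"
proof -
  assume x: "x \<in> sp_sl_sum n K"
  have "is_sp n (mscal c (x 1))" using x by (intro sp_mscal) (simp_all add: sp_sl_sum_def)
  moreover have "\<forall>k\<in>{2..K}. is_sl (2*n) (mscal c (x k))" using x by (auto intro!: sl_mscal simp: sp_sl_sum_def)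
  moreover have "\<forall>k. k \<notin> {1..K} \<longrightarrow> vscal c x k = (\<lambda>_ _. 0)" using x by (auto simp: sp_sl_sum_def vscal_def)
  ultimately show ?thesis by (simp add: sp_sl_sum_def vscal_apply)
qed

lemma sp_sl_sum_vbr: "x \<in> sp_sl_sum n K \<Longrightarrow> y \<in> sp_sl_sum n K \<Longrightarrow> vbr (2*n) x y \<in> sp_sl_sum n K"
proof -
  assume x: "x \<in> sp_sl_sum n K" and y: "y \<in> sp_sl_sum n K"
  have "is_sp n (mbr (2*n) (x 1) (y 1))" using x y by (intro sp_mbr) (simp_all add: sp_sl_sum_def)
  moreover have "\<forall>k\<in>{2..K}. is_sl (2*n) (mbr (2*n) (x k) (y k))" using x y by (auto intro!: sl_mbr simp: sp_sl_sum_def)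
  moreover have "\<forall>k. k \<notin> {1..K} \<longrightarrow> vbr (2*n) x y k = (\<lambda>_ _. 0)" using x y by (auto simp: sp_sl_sum_def vbr_def)
  ultimately show ?thesis by (simp add: sp_sl_sum_def vbr_apply)
qed

section \<open>Spanning sets of sl and sp\<close>

text \<open>\<open>Egl n p q\<close> is the image of \<open>E(p,q)\<close> under the embedding \<open>X \<mapsto> diag(X, -X\<^sup>T)\<close> of
  gl(n) into sp(2n); together with the symmetric blocks \<open>Eup\<close> and \<open>Elow\<close> these span sp(2n).\<close>

definition Egl :: "nat \<Rightarrow> nat \<Rightarrow> nat \<Rightarrow> cmat" where
  "Egl n p q = madd (Eu p q) (mscal (-1) (Eu (n+q) (n+p)))"

lemma mbr_Egl_left:
  assumes "r \<in> {1..n}" "s \<in> {1..n}"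
  shows "mbr (2*n) (Egl n r s) Y = (\<lambda>i j. (if i = r then Y s j else 0) - (if j = s then Y i r else 0)
     - ((if i = n+s then Y (n+r) j else 0) - (if j = n+r then Y i (n+s) else 0)))"
proof -
  have a: "r \<in> {1..2*n}" "s \<in> {1..2*n}" "n+s \<in> {1..2*n}" "n+r \<in> {1..2*n}" using assms by auto
  show ?thesis unfolding Egl_def mbr_madd_left mbr_mscal_left mbr_Eu_left[OF a(1,2)] mbr_Eu_left[OF a(3,4)]
    by (simp add: madd_def mscal_def algebra_simps)
qed

lemma mbr_Egl_Eu:
  assumes "r \<in> {1..n}" "s \<in> {1..n}" "p \<in> {1..n}" "q \<in> {1..n}"
  shows "mbr (2*n) (Egl n r s) (Eu p q) = madd (if s = p then Eu r q else mzero) (mscal (-1) (if q = r then Eu p s else mzero))"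
  using assms unfolding mbr_Egl_left[OF assms(1,2)]
    by (intro ext) (simp add: Eu_def madd_def mscal_def mzero_def)

lemma mbr_Egl_Egl:
  assumes "r \<in> {1..n}" "s \<in> {1..n}" "p \<in> {1..n}" "q \<in> {1..n}"
  shows "mbr (2*n) (Egl n r s) (Egl n p q) = madd (if s = p then Egl n r q else mzero) (mscal (-1) (if q = r then Egl n p s else mzero))"
  using assms unfolding mbr_Egl_left[OF assms(1,2)] unfolding Egl_def
    by (intro ext) (simp add: Eu_def madd_def mscal_def mzero_def)

lemma mbr_Egl_Eu_upper:
  assumes "r \<in> {1..n}" "s \<in> {1..n}" "p \<in> {1..n}" "q \<in> {1..n}"
  shows "mbr (2*n) (Egl n r s) (Eu p (n+q)) = madd (if s = p then Eu r (n+q) else mzero) (if q = s then Eu p (n+r) else mzero)"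
  using assms unfolding mbr_Egl_left[OF assms(1,2)]
    by (intro ext) (simp add: Eu_def madd_def mscal_def mzero_def)

lemma mbr_Egl_Eu_lower:
  assumes "r \<in> {1..n}" "s \<in> {1..n}" "p \<in> {1..n}" "q \<in> {1..n}"
  shows "mbr (2*n) (Egl n r s) (Eu (n+p) q) = mscal (-1) (madd (if r = p then Eu (n+s) q else mzero) (if q = r then Eu (n+p) s else mzero))"
  using assms unfolding mbr_Egl_left[OF assms(1,2)]
    by (intro ext) (simp add: Eu_def madd_def mscal_def mzero_def)

definition Eup :: "nat \<Rightarrow> nat \<Rightarrow> nat \<Rightarrow> cmat" where
  "Eup n p q = madd (Eu p (n+q)) (Eu q (n+p))"

definition Elow :: "nat \<Rightarrow> nat \<Rightarrow> nat \<Rightarrow> cmat" where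
  "Elow n p q = madd (Eu (n+p) q) (Eu (n+q) p)"

lemma Eup_sym: "Eup n p q = Eup n q p" by (auto simp: Eup_def madd_def intro!: ext)

lemma Elow_sym: "Elow n p q = Elow n q p" by (auto simp: Elow_def madd_def intro!: ext)

lemma mbr_Egl_Eup:
  assumes "r \<in> {1..n}" "s \<in> {1..n}" "p \<in> {1..n}" "q \<in> {1..n}"
  shows "mbr (2*n) (Egl n r s) (Eup n p q) = madd (if s = p then Eup n r q else mzero) (if s = q then Eup n r p else mzero)"
  unfolding mbr_Egl_left[OF assms(1,2)] using assms
    by (intro ext) (simp add: Eup_def Eu_def madd_def mzero_def)

lemma mbr_Egl_Elow:
  assumes "r \<in> {1..n}" "s \<in> {1..n}" "p \<in> {1..n}" "q \<in> {1..n}"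
  shows "mbr (2*n) (Egl n s r) (Elow n p q) = mscal (-1) (madd (if s = p then Elow n r q else mzero) (if s = q then Elow n r p else mzero))"
  unfolding mbr_Egl_left[OF assms(2,1)] using assms
    by (intro ext) (simp add: Elow_def Eu_def madd_def mscal_def mzero_def)

lemma mbr_Eup_Elow_diag:
  assumes "p \<in> {1..n}"
  shows "mbr (2*n) (Eup n p p) (Elow n p p) = mscal 4 (Egl n p p)"
proof -
  have a: "p \<in> {1..2*n}" "n+p \<in> {1..2*n}" using assms by auto
  show ?thesis
    unfolding Eup_def mbr_madd_left mbr_Eu_left[OF a] using assms
    by (intro ext) (simp add: Elow_def Egl_def Eu_def madd_def mscal_def)
qed

text \<open>\<open>Esp n p q\<close> is \<open>E(p,q)\<close> plus its image under the involution of \<open>sp_entry_reflect\<close>,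
  whose fixed points form sp(2n); in each block it is one of \<open>Egl\<close>, \<open>Eup\<close>, \<open>Elow\<close>.\<close>

definition Esp :: "nat \<Rightarrow> nat \<Rightarrow> nat \<Rightarrow> cmat" where
  "Esp n p q = madd (Eu p q) (mscal (-(psign n p * psign n q)) (Eu (pswap n q) (pswap n p)))"

lemma Esp_upper_left: "p \<le> n \<Longrightarrow> q \<le> n \<Longrightarrow> Esp n p q = Egl n p q"
 
    by (intro ext) (simp add: Esp_def Egl_def pswap_def psign_def Eu_def madd_def mscal_def add.commute)

lemma Esp_upper_right: "p \<le> n \<Longrightarrow> n < q \<Longrightarrow> Esp n p q = Eup n p (q - n)"
 
    by (intro ext) (simp add: Esp_def Eup_def pswap_def psign_def Eu_def madd_def mscal_def add.commute)

lemma Esp_lower_left: "n < p \<Longrightarrow> q \<le> n \<Longrightarrow> Esp n p q = Elow n (p - n) q"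
 
    by (intro ext) (simp add: Esp_def Elow_def pswap_def psign_def Eu_def madd_def mscal_def add.commute)

lemma Esp_lower_right: "n < p \<Longrightarrow> n < q \<Longrightarrow> Esp n p q = mscal (-1) (Egl n (q - n) (p - n))"
 
    by (intro ext) (simp add: Esp_def Egl_def pswap_def psign_def Eu_def madd_def mscal_def add.commute)

lemma Esp_pswap_row:
  assumes p: "p\<in>{1..2*n}" and q: "q\<in>{1..2*n}" and i: "i\<in>{1..2*n}"
  shows "Esp n p q (pswap n i) j = (if i = pswap n p \<and> j = q then 1 else 0)
     - (if i = q \<and> j = pswap n p then psign n p * psign n q else 0)"
proof -
  have "Esp n p q (pswap n i) j = (if pswap n i = p \<and> j = q then 1 else 0)
      - (if pswap n i = pswap n q \<and> j = pswap n p then psign n p * psign n q else 0)"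
    by (simp add: Esp_def Eu_def madd_def mscal_def)
  also have "\<dots> = (if i = pswap n p \<and> j = q then 1 else 0) - (if i = q \<and> j = pswap n p then psign n p * psign n q else 0)"
    unfolding pswap_eq[OF i p] pswap_inj[OF i q] ..
  finally show ?thesis .
qed

lemma Esp_sp:
  assumes p: "p\<in>{1..2*n}" and q: "q\<in>{1..2*n}"
  shows "is_sp n (Esp n p q)"
  unfolding sp_char
proof (intro conjI ballI)
  show "supp_ok (2*n) (Esp n p q)"
    using pswap_range p q by (auto simp: supp_ok_def Esp_def madd_def mscal_def Eu_def)
  fix i j assume i: "i\<in>{1..2*n}" and j: "j\<in>{1..2*n}"
  have sign: "psign n (pswap n p) * 1 = psign n q * - (psign n p * psign n q)"
    using psign_pswap[OF p] by (cases "q \<le> n") (simp_all add: psign_def)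
  consider "i = j" | "i \<noteq> j" "i = pswap n p" "j = q" | "i \<noteq> j" "i = q" "j = pswap n p"
    | "\<not> (i = pswap n p \<and> j = q)" "\<not> (i = q \<and> j = pswap n p)"
    by blast
  then show "psign n i * Esp n p q (pswap n i) j = psign n j * Esp n p q (pswap n j) i"
  proof cases
    case 2
    then show ?thesis unfolding Esp_pswap_row[OF p q i] Esp_pswap_row[OF p q j] using sign by simp
  next
    case 3
    then show ?thesis unfolding Esp_pswap_row[OF p q i] Esp_pswap_row[OF p q j] using sign by simp
  next
    case 4
    moreover have "\<not> (j = q \<and> i = pswap n p)" "\<not> (j = pswap n p \<and> i = q)"
      using 4 by blast+
    ultimately show ?thesis
      unfolding Esp_pswap_row[OF p q i] Esp_pswap_row[OF p q j] by (simp only: if_False) simp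
  qed simp
qed

lemma sum_reflected_Eu_entries:
  "(\<Sum>x\<in>{1..2*n}\<times>{1..2*n}. c x * Eu (pswap n (snd x)) (pswap n (fst x)) i j)
     = (if i \<in> {1..2*n} \<and> j \<in> {1..2*n} then c (pswap n j, pswap n i) else 0)"
proof -
  let ?R = "{1..2*n}" and ?\<rho> = "\<lambda>x. (pswap n (snd x), pswap n (fst x))"
  have "(\<Sum>x\<in>?R\<times>?R. c x * Eu (pswap n (snd x)) (pswap n (fst x)) i j)
      = (\<Sum>y\<in>?R\<times>?R. c (?\<rho> y) * Eu (fst y) (snd y) i j)"
    by (rule sum.reindex_bij_witness[of _ ?\<rho> ?\<rho>]) (force simp: pswap_def)+
  also have "\<dots> = (if i \<in> ?R \<and> j \<in> ?R then c (pswap n j, pswap n i) else 0)"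
    by (subst sum_Eu_entries) auto
  finally show ?thesis .
qed

lemma sp_expansion:
  assumes "is_sp n M"
  shows "M = mscal (1/2)
    (msum (\<lambda>x. mscal (M (fst x) (snd x)) (Esp n (fst x) (snd x))) ({1..2*n} \<times> {1..2*n}))"
proof (intro ext)
  fix i j
  let ?R = "{1..2*n}"
  have "msum (\<lambda>x. mscal (M (fst x) (snd x)) (Esp n (fst x) (snd x))) (?R \<times> ?R) i j
     = (\<Sum>x\<in>?R\<times>?R. M (fst x) (snd x) * Eu (fst x) (snd x) i j) +
       (\<Sum>x\<in>?R\<times>?R. (M (fst x) (snd x) * -(psign n (fst x) * psign n (snd x)))
          * Eu (pswap n (snd x)) (pswap n (fst x)) i j)"
    by (simp add: msum_def Esp_def madd_def mscal_def sum.distrib[symmetric] algebra_simps)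
  also have "\<dots> = 2 * M i j"
  proof (cases "i \<in> ?R \<and> j \<in> ?R")
    case True
    then show ?thesis
      unfolding sum_Eu_entries[OF finite_SigmaI[OF finite_atLeastAtMost finite_atLeastAtMost]]
        sum_reflected_Eu_entries
      using sp_entry_reflect[OF assms, of i j] psign_pswap[of i n] psign_pswap[of j n]
      by (simp add: algebra_simps)
  next
    case False
    moreover have "M i j = 0" using assms False by (auto simp: is_sp_def supp_ok_def)
    ultimately show ?thesis
      unfolding sum_Eu_entries[OF finite_SigmaI[OF finite_atLeastAtMost finite_atLeastAtMost]]
        sum_reflected_Eu_entries
      by auto
  qed
  finally show "M i j = mscal (1/2)
    (msum (\<lambda>x. mscal (M (fst x) (snd x)) (Esp n (fst x) (snd x))) (?R \<times> ?R)) i j"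
    by (simp add: mscal_def)
qed

lemma sl_expansion:
  assumes "is_sl N M"
  shows "M = madd
    (msum (\<lambda>x. mscal (M (fst x) (snd x)) (Eu (fst x) (snd x))) {x\<in>{1..N}\<times>{1..N}. fst x \<noteq> snd x})
    (msum (\<lambda>p. mscal (M p p) (madd (Eu p p) (mscal (-1) (Eu N N)))) {1..N})"
proof (intro ext)
  fix i j
  let ?R = "{1..N}" and ?O = "{x\<in>{1..N}\<times>{1..N}. fst x \<noteq> snd x}"
  have "finite ?O" by (rule finite_subset[of _ "?R\<times>?R"]) auto
  have trace: "(\<Sum>p\<in>?R. M p p) = 0" using assms by (simp add: is_sl_def)
  have "(\<Sum>p\<in>?R. M p p * (Eu p p i j - Eu N N i j))
      = (\<Sum>p\<in>?R. M p p * Eu p p i j) - (\<Sum>p\<in>?R. M p p) * Eu N N i j"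
    by (simp add: right_diff_distrib sum_subtractf sum_distrib_right)
  also have "\<dots> = (\<Sum>p\<in>?R. M p p * Eu p p i j)"
    unfolding trace by simp
  also have "\<dots> = (\<Sum>p\<in>?R. if p = i then (if i = j then M i i else 0) else 0)"
    by (rule sum.cong) (auto simp: Eu_def)
  finally have diag: "(\<Sum>p\<in>?R. M p p * (Eu p p i j - Eu N N i j)) = (if i = j \<and> i \<in> ?R then M i i else 0)"
    by (simp add: sum.delta)
  have "madd (msum (\<lambda>x. mscal (M (fst x) (snd x)) (Eu (fst x) (snd x))) ?O)
          (msum (\<lambda>p. mscal (M p p) (madd (Eu p p) (mscal (-1) (Eu N N)))) ?R) i j
      = (\<Sum>x\<in>?O. M (fst x) (snd x) * Eu (fst x) (snd x) i j) + (\<Sum>p\<in>?R. M p p * (Eu p p i j - Eu N N i j))"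
    by (simp add: madd_def msum_def mscal_def algebra_simps)
  also have "\<dots> = M i j"
  proof (cases "i \<in> ?R \<and> j \<in> ?R")
    case True
    then show ?thesis unfolding sum_Eu_entries[OF \<open>finite ?O\<close>] diag by auto
  next
    case False
    then have "M i j = 0" using assms unfolding is_sl_def supp_ok_def by blast
    then show ?thesis unfolding sum_Eu_entries[OF \<open>finite ?O\<close>] diag using False by auto
  qed
  finally show "M i j = madd (msum (\<lambda>x. mscal (M (fst x) (snd x)) (Eu (fst x) (snd x))) ?O)
          (msum (\<lambda>p. mscal (M p p) (madd (Eu p p) (mscal (-1) (Eu N N)))) ?R) i j" by simp
qed

lemma psi_e_n: "psi_e n b n = madd (Eu n (n+1)) (mscal (inverse b) (Eu 1 (2*n)))"
  by (simp add: psi_e_def)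

lemma psi_f_n: "psi_f n b n = madd (Eu (n+1) n) (mscal b (Eu (2*n) 1))"
  by (simp add: psi_f_def)

lemma psi_e_lt: "i < n \<Longrightarrow> psi_e n b i = Egl n i (i+1)"
  by (simp add: psi_e_def Egl_def add.assoc)

lemma psi_f_lt: "i < n \<Longrightarrow> psi_f n b i = Egl n (i+1) i"
  by (simp add: psi_f_def Egl_def add.assoc)

lemma mbr_Egl_1n_psi_e_n:
  assumes "n \<ge> 3"
  shows "mbr (2*n) (Egl n 1 n) (psi_e n b n) = mscal (1 + inverse b) (Eu 1 (n+1))"
proof -
  have a: "(1::nat) \<in> {1..n}" "n \<in> {1..n}" using assms by auto
  show ?thesis
    unfolding mbr_Egl_left[OF a] psi_e_n using assms
      by (intro ext) (simp add: Eu_def madd_def mscal_def algebra_simps)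
qed

lemma mbr_Egl_n1_psi_f_n:
  assumes "n \<ge> 3"
  shows "mbr (2*n) (Egl n n 1) (psi_f n b n) = mscal (-(1 + b)) (Eu (n+1) 1)"
proof -
  have a: "n \<in> {1..n}" "(1::nat) \<in> {1..n}" using assms by auto
  show ?thesis
    unfolding mbr_Egl_left[OF a] psi_f_n using assms
      by (intro ext) (simp add: Eu_def madd_def mscal_def algebra_simps)
qed

definition Hdiff :: "nat \<Rightarrow> cmat" where "Hdiff n = madd (Eu 1 1) (mscal (-1) (Eu (n+1) (n+1)))"

lemma mbr_Eu_Eu_Hdiff:
  assumes "n \<ge> 3"
  shows "mbr (2*n) (Eu 1 (n+1)) (Eu (n+1) 1) = Hdiff n"
proof -
  have a: "(1::nat) \<in> {1..2*n}" "n+1 \<in> {1..2*n}" using assms by auto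
  show ?thesis
    unfolding mbr_Eu_left[OF a] Hdiff_def using assms
      by (intro ext) (simp add: Eu_def madd_def mscal_def)
qed

lemma mbr_Hdiff_Egl_12:
  assumes "n \<ge> 3"
  shows "mbr (2*n) (Hdiff n) (Egl n 1 2) = Egl n 1 2"
proof -
  have a: "(1::nat) \<in> {1..2*n}" "n+1 \<in> {1..2*n}" using assms by auto
  show ?thesis
    unfolding Hdiff_def mbr_madd_left mbr_mscal_left mbr_Eu_left[OF a(1) a(1)] mbr_Eu_left[OF a(2) a(2)]
    using assms by (intro ext) (simp add: Egl_def Eu_def madd_def mscal_def)
qed

lemma mbr_Egl_2n_psi_e_n:
  assumes "n \<ge> 3"
  shows "mbr (2*n) (Egl n 2 n) (psi_e n b n) = madd (Eu 2 (n+1)) (mscal (inverse b) (Eu 1 (n+2)))"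
proof -
  have a: "(2::nat) \<in> {1..n}" "n \<in> {1..n}" using assms by auto
  show ?thesis
    unfolding mbr_Egl_left[OF a] psi_e_n using assms
      by (intro ext) (simp add: Eu_def madd_def mscal_def algebra_simps)
qed

lemma mbr_Egl_31_upper:
  assumes "n \<ge> 3"
  shows "mbr (2*n) (Egl n 3 1) (madd (Eu 2 (n+1)) (mscal c (Eu 1 (n+2)))) = madd (Eu 2 (n+3)) (mscal c (Eu 3 (n+2)))"
proof -
  have a: "(3::nat) \<in> {1..n}" "(1::nat) \<in> {1..n}" using assms by auto
  show ?thesis
    unfolding mbr_Egl_left[OF a] using assms
      by (intro ext) (simp add: Eu_def madd_def mscal_def algebra_simps)
qed

lemma mbr_Egl_12_upper:
  assumes "n \<ge> 3"
  shows "mbr (2*n) (Egl n 1 2) (madd (Eu 2 (n+3)) (mscal c (Eu 3 (n+2)))) = madd (Eu 1 (n+3)) (mscal c (Eu 3 (n+1)))"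
proof -
  have a: "(1::nat) \<in> {1..n}" "(2::nat) \<in> {1..n}" using assms by auto
  show ?thesis
    unfolding mbr_Egl_left[OF a] using assms
      by (intro ext) (simp add: Eu_def madd_def mscal_def algebra_simps)
qed

lemma mbr_Egl_23_upper:
  assumes "n \<ge> 3"
  shows "mbr (2*n) (Egl n 2 3) (madd (Eu 1 (n+3)) (mscal c (Eu 3 (n+1)))) = madd (Eu 1 (n+2)) (mscal c (Eu 2 (n+1)))"
proof -
  have a: "(2::nat) \<in> {1..n}" "(3::nat) \<in> {1..n}" using assms by auto
  show ?thesis
    unfolding mbr_Egl_left[OF a] using assms
      by (intro ext) (simp add: Eu_def madd_def mscal_def algebra_simps)
qed

lemma upper_pair_combination:
  "madd (madd (Eu 2 (n+1)) (mscal c (Eu 1 (n+2))))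
     (mscal (-c) (madd (Eu 1 (n+2)) (mscal c (Eu 2 (n+1))))) = mscal (1 - c*c) (Eu 2 (n+1))"
  by (auto simp: Eu_def madd_def mscal_def algebra_simps intro!: ext)

lemma mbr_Eu_2n1_psi_f_n:
  assumes "n \<ge> 3"
  shows "mbr (2*n) (Eu 2 (n+1)) (psi_f n b n) = Eu 2 n"
proof -
  have a: "(2::nat) \<in> {1..2*n}" "n+1 \<in> {1..2*n}" using assms by auto
  show ?thesis
    unfolding mbr_Eu_left[OF a] psi_f_n using assms
      by (intro ext) (simp add: Eu_def madd_def mscal_def)
qed

lemma mbr_psi_f_n_Eu_n2:
  assumes "n \<ge> 3"
  shows "mbr (2*n) (psi_f n b n) (Eu n 2) = Eu (n+1) 2"
proof -
  have a: "n \<in> {1..2*n}" "(2::nat) \<in> {1..2*n}" using assms by auto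
  show ?thesis
    unfolding mbr_Eu_right[OF a] psi_f_n using assms
      by (intro ext) (simp add: Eu_def madd_def mscal_def)
qed

lemma mbr_Egl_2n_psi_e1_n:
  assumes "n \<ge> 3"
  shows "mbr (2*n) (Egl n 2 n) (psi_e n 1 n) = Eup n 2 1"
  unfolding mbr_Egl_2n_psi_e_n[OF assms] by (simp add: Eup_def mscal_def)

lemma mbr_Egl_n2_psi_f1_n:
  assumes "n \<ge> 3"
  shows "mbr (2*n) (Egl n n 2) (psi_f n 1 n) = mscal (-1) (Elow n 2 1)"
proof -
  have a: "n \<in> {1..n}" "(2::nat) \<in> {1..n}" using assms by auto
  show ?thesis
    unfolding mbr_Egl_left[OF a] psi_f_n using assms
      by (intro ext) (simp add: Elow_def Eu_def madd_def mscal_def)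
qed

lemma psi_e_sl: "i \<in> {1..n} \<Longrightarrow> is_sl (2*n) (psi_e n b i)"
  by (rule sl_of_zero_diag) (auto simp: supp_ok_def psi_e_def Eu_def madd_def mscal_def)

lemma psi_f_sl: "i \<in> {1..n} \<Longrightarrow> is_sl (2*n) (psi_f n b i)"
  by (rule sl_of_zero_diag) (auto simp: supp_ok_def psi_f_def Eu_def madd_def mscal_def)

lemma psi_e_sp: "i \<in> {1..n} \<Longrightarrow> is_sp n (psi_e n 1 i)"
proof -
  assume i: "i \<in> {1..n}"
  show ?thesis
  proof (cases "i < n")
    case True
    have "psi_e n 1 i = Esp n i (i+1)" using True i by (simp add: psi_e_lt Esp_upper_left)
    then show ?thesis using Esp_sp[of i n "i+1"] True i by simp
  next
    case False
    then have "i = n" using i by simp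
    have "psi_e n 1 n = Eup n n 1" by (auto simp: psi_e_n Eup_def mscal_def madd_def mult_2 intro!: ext)
    also have "\<dots> = Esp n n (n+1)" using Esp_upper_right[of n n "n+1"] by simp
    finally show ?thesis using Esp_sp[of n n "n+1"] \<open>i = n\<close> i by simp
  qed
qed

lemma psi_f_sp: "i \<in> {1..n} \<Longrightarrow> is_sp n (psi_f n 1 i)"
proof -
  assume i: "i \<in> {1..n}"
  show ?thesis
  proof (cases "i < n")
    case True
    have "psi_f n 1 i = Esp n (i+1) i" using True i by (simp add: psi_f_lt Esp_upper_left)
    then show ?thesis using Esp_sp[of "i+1" n i] True i by simp
  next
    case False
    then have "i = n" using i by simp
    have "psi_f n 1 n = Elow n 1 n" by (auto simp: psi_f_n Elow_def mscal_def madd_def mult_2 intro!: ext)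
    also have "\<dots> = Esp n (n+1) n" using Esp_lower_left[of n "n+1" n] by simp
    finally show ?thesis using Esp_sp[of "n+1" n n] \<open>i = n\<close> i by simp
  qed
qed

lemma add_inverse_eq_cases:
  fixes x y :: complex
  assumes "x \<noteq> 0" "y \<noteq> 0" "(1 + inverse x) * (1 + x) = (1 + inverse y) * (1 + y)"
  shows "x = y \<or> x = inverse y"
proof -
  have "(x - y) * (x * y - 1) = 0"
    using assms by (simp add: field_simps)
  then have "x = y \<or> x * y = 1" by simp
  then show ?thesis using assms(2) by (auto simp: field_simps)
qed

section \<open>Slices of a generated Lie algebra\<close>

definition copies :: "nat \<Rightarrow> (nat \<Rightarrow> complex) \<Rightarrow> cmat \<Rightarrow> cmats" where
  "copies K \<phi> M = (\<lambda>k. if 1 \<le> k \<and> k \<le> K then mscal (\<phi> k) M else mzero)"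

definition single :: "nat \<Rightarrow> cmat \<Rightarrow> cmats" where
  "single k M = (\<lambda>k'. if k' = k then M else mzero)"

definition vsum :: "('b \<Rightarrow> cmats) \<Rightarrow> 'b set \<Rightarrow> cmats" where
  "vsum F A = (\<lambda>k i j. \<Sum>x\<in>A. F x k i j)"

lemma lie_gen_vsum:
  assumes "finite A" "\<And>x. x \<in> A \<Longrightarrow> F x \<in> lie_gen N G"
  shows "vsum F A \<in> lie_gen N G"
  using assms
proof (induction A rule: finite_induct)
  case empty
  then show ?case by (simp add: vsum_def lie_gen.zero)
next
  case (insert x A)
  have "vsum F (insert x A) = vadd (F x) (vsum F A)"
    using insert by (simp add: vsum_def vadd_def)
  then show ?case using insert by (auto intro: lie_gen.add)
qed

lemma lie_gen_least:
  assumes "G \<subseteq> S" "(\<lambda>k i j. 0) \<in> S"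
    "\<And>x y. x \<in> S \<Longrightarrow> y \<in> S \<Longrightarrow> vadd x y \<in> S" "\<And>c x. x \<in> S \<Longrightarrow> vscal c x \<in> S"
    "\<And>x y. x \<in> S \<Longrightarrow> y \<in> S \<Longrightarrow> vbr N x y \<in> S"
  shows "lie_gen N G \<subseteq> S"
proof
  fix x assume "x \<in> lie_gen N G"
  then show "x \<in> S" by induction (use assms in auto)
qed

text \<open>For \<open>L = lie_gen N G\<close>, \<open>slice N G k\<close> consists of the matrices \<open>M\<close> with
  \<open>(0, \<dots>, 0, M, 0, \<dots>, 0) \<in> L\<close> (\<open>M\<close> in position \<open>k\<close>), and \<open>component N G k\<close> is the projection
  of \<open>L\<close> to position \<open>k\<close>; the slice is an ideal of the component.\<close>

definition slice :: "nat \<Rightarrow> cmats set \<Rightarrow> nat \<Rightarrow> cmat set" where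
  "slice N G k = {M. single k M \<in> lie_gen N G}"

definition component :: "nat \<Rightarrow> cmats set \<Rightarrow> nat \<Rightarrow> cmat set" where
  "component N G k = {M. \<exists>y\<in>lie_gen N G. y k = M}"

lemma slice_add: "M \<in> slice N G k \<Longrightarrow> M' \<in> slice N G k \<Longrightarrow> madd M M' \<in> slice N G k"
proof -
  assume "M \<in> slice N G k" "M' \<in> slice N G k"
  then have "vadd (single k M) (single k M') \<in> lie_gen N G" by (auto simp: slice_def intro: lie_gen.add)
  moreover have "vadd (single k M) (single k M') = single k (madd M M')"
    by (auto simp: vadd_def single_def madd_def mzero_def)
  ultimately show ?thesis by (simp add: slice_def)
qed

lemma slice_scal: "M \<in> slice N G k \<Longrightarrow> mscal c M \<in> slice N G k"
proof -
  assume "M \<in> slice N G k"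
  then have "vscal c (single k M) \<in> lie_gen N G" by (auto simp: slice_def intro: lie_gen.scal)
  moreover have "vscal c (single k M) = single k (mscal c M)"
    by (auto simp: vscal_def single_def mscal_def mzero_def)
  ultimately show ?thesis by (simp add: slice_def)
qed

lemma slice_zero: "mzero \<in> slice N G k"
proof -
  have "single k mzero = (\<lambda>k i j. 0)" by (auto simp: single_def mzero_def)
  then show ?thesis by (simp add: slice_def lie_gen.zero)
qed

lemma slice_msum:
  assumes "finite A" "\<And>x. x \<in> A \<Longrightarrow> F x \<in> slice N G k"
  shows "msum F A \<in> slice N G k"
  using assms
proof (induction A rule: finite_induct)
  case empty
  then show ?case using slice_zero by (simp add: msum_def mzero_def)
next
  case (insert x A)
  have "msum F (insert x A) = madd (F x) (msum F A)"
    using insert by (simp add: msum_def madd_def)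
  then show ?case using insert by (auto intro: slice_add)
qed

lemma slice_br_right: "M \<in> slice N G k \<Longrightarrow> Q \<in> component N G k \<Longrightarrow> mbr N M Q \<in> slice N G k"
proof -
  assume "M \<in> slice N G k" "Q \<in> component N G k"
  then obtain y where y: "y \<in> lie_gen N G" "y k = Q" and m: "single k M \<in> lie_gen N G"
    by (auto simp: slice_def component_def)
  then have "vbr N (single k M) y \<in> lie_gen N G" by (auto intro: lie_gen.br)
  moreover have "vbr N (single k M) y = single k (mbr N M Q)"
    using y by (auto simp: vbr_apply[abs_def] single_def mbr_zero_left)
  ultimately show ?thesis by (simp add: slice_def)
qed

lemma slice_br_left: "M \<in> slice N G k \<Longrightarrow> Q \<in> component N G k \<Longrightarrow> mbr N Q M \<in> slice N G k"
  by (subst mbr_antisym) (intro slice_scal slice_br_right)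

lemma slice_component: "M \<in> slice N G k \<Longrightarrow> M \<in> component N G k"
  by (auto simp: slice_def component_def single_def intro!: bexI[where x="single k M"])

lemma slice_br: "M \<in> slice N G k \<Longrightarrow> M' \<in> slice N G k \<Longrightarrow> mbr N M M' \<in> slice N G k"
  by (intro slice_br_right slice_component)

lemma component_gen: "y \<in> G \<Longrightarrow> y k \<in> component N G k"
  unfolding component_def by (auto intro: lie_gen.gen)

definition diagonal :: "nat \<Rightarrow> nat \<Rightarrow> cmats set \<Rightarrow> cmat set" where
  "diagonal N K G = {M. copies K (\<lambda>_. 1) M \<in> lie_gen N G}"

lemma copies_1: "copies K (\<lambda>_. 1) M = (\<lambda>k. if 1 \<le> k \<and> k \<le> K then M else mzero)"
  by (auto simp: copies_def mscal_def)

lemma diagonal_br: "M \<in> diagonal N K G \<Longrightarrow> M' \<in> diagonal N K G \<Longrightarrow> mbr N M M' \<in> diagonal N K G"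
proof -
  assume "M \<in> diagonal N K G" "M' \<in> diagonal N K G"
  then have "vbr N (copies K (\<lambda>_. 1) M) (copies K (\<lambda>_. 1) M') \<in> lie_gen N G"
    by (auto simp: diagonal_def intro: lie_gen.br)
  moreover have "vbr N (copies K (\<lambda>_. 1) M) (copies K (\<lambda>_. 1) M') = copies K (\<lambda>_. 1) (mbr N M M')"
    by (auto simp: copies_1 vbr_apply[abs_def] mbr_zero_left)
  ultimately show ?thesis by (simp add: diagonal_def)
qed

lemma diagonal_component: "M \<in> diagonal N K G \<Longrightarrow> 1 \<le> k \<Longrightarrow> k \<le> K \<Longrightarrow> M \<in> component N G k"
  unfolding diagonal_def component_def by (auto simp: copies_1 intro!: bexI[where x="copies K (\<lambda>_. 1) M"])

lemma vadd_copies: "vadd (copies K \<phi> X) (copies K \<psi> X) = copies K (\<lambda>k. \<phi> k + \<psi> k) X"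
  by (auto simp: vadd_def copies_def mscal_def mzero_def algebra_simps intro!: ext)

lemma vscal_copies: "vscal c (copies K \<phi> X) = copies K (\<lambda>k. c * \<phi> k) X"
  by (auto simp: vscal_def copies_def mscal_def mzero_def intro!: ext)

lemma vbr_copies: "vbr N (copies K \<phi> A) (copies K \<psi> B) = copies K (\<lambda>k. \<phi> k * \<psi> k) (mbr N A B)"
  by (auto simp: vbr_apply[abs_def] copies_def mbr_mscal_left mbr_mscal_right mbr_zero_left
      intro!: ext) (simp add: mscal_def)

lemma lie_gen_of_slices:
  assumes "finite A" "\<And>k. k \<notin> A \<Longrightarrow> X k = mzero" "\<And>k. k \<in> A \<Longrightarrow> X k \<in> slice N G k"
  shows "X \<in> lie_gen N G"
proof -
  have "vsum (\<lambda>k. single k (X k)) A \<in> lie_gen N G"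
    using assms(1,3) by (intro lie_gen_vsum) (auto simp: slice_def)
  moreover have "vsum (\<lambda>k. single k (X k)) A = X"
  proof (intro ext)
    fix k i j
    have "(\<Sum>x\<in>A. single x (X x) k i j) = (\<Sum>x\<in>A. if x = k then X k i j else 0)"
      by (rule sum.cong) (auto simp: single_def mzero_def)
    then show "vsum (\<lambda>k. single k (X k)) A k i j = X k i j"
      using assms(1) assms(2)[of k] by (cases "k \<in> A") (auto simp: vsum_def mzero_def)
  qed
  ultimately show ?thesis by simp
qed

lemma slice_scal_inv: "mscal c M \<in> slice N G k \<Longrightarrow> c \<noteq> 0 \<Longrightarrow> M \<in> slice N G k"
proof -
  assume h: "mscal c M \<in> slice N G k" "c \<noteq> 0"
  have "mscal (inverse c) (mscal c M) \<in> slice N G k" using h(1) by (rule slice_scal)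
  moreover have "mscal (inverse c) (mscal c M) = M" using h(2) by (auto simp: mscal_def intro!: ext)
  ultimately show ?thesis by simp
qed

lemma offdiag_from_hub:
  fixes u :: "nat \<Rightarrow> nat \<Rightarrow> cmat"
  assumes br: "\<And>x y. x\<in>S \<Longrightarrow> y\<in>S \<Longrightarrow> mbr N x y \<in> S"
    and compose: "\<And>p q r. p\<in>I \<Longrightarrow> q\<in>I \<Longrightarrow> r\<in>I \<Longrightarrow> p\<noteq>q \<Longrightarrow> q\<noteq>r \<Longrightarrow> p\<noteq>r \<Longrightarrow> mbr N (u p q) (u q r) = u p r"
    and h: "h \<in> I" "\<And>x. x\<in>I \<Longrightarrow> x\<noteq>h \<Longrightarrow> u h x \<in> S \<and> u x h \<in> S"
  shows "p\<in>I \<Longrightarrow> q\<in>I \<Longrightarrow> p\<noteq>q \<Longrightarrow> u p q \<in> S"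
proof -
  assume pq: "p\<in>I" "q\<in>I" "p\<noteq>q"
  show ?thesis
  proof (cases "p = h \<or> q = h")
    case True then show ?thesis using h pq by auto
  next
    case False
    then have "mbr N (u p h) (u h q) = u p q" using compose pq h by auto
    then show ?thesis using br[of "u p h" "u h q"] h pq False by auto
  qed
qed

lemma offdiag_from_adjacent:
  fixes u :: "nat \<Rightarrow> nat \<Rightarrow> cmat"
  assumes br: "\<And>x y. x\<in>S \<Longrightarrow> y\<in>S \<Longrightarrow> mbr N x y \<in> S"
    and compose: "\<And>p q r. p\<in>{lo..hi} \<Longrightarrow> q\<in>{lo..hi} \<Longrightarrow> r\<in>{lo..hi} \<Longrightarrow>
      p\<noteq>q \<Longrightarrow> q\<noteq>r \<Longrightarrow> p\<noteq>r \<Longrightarrow> mbr N (u p q) (u q r) = u p r"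
    and adjacent: "\<And>i. lo \<le> i \<Longrightarrow> i < hi \<Longrightarrow> u i (Suc i) \<in> S \<and> u (Suc i) i \<in> S"
  shows "p\<in>{lo..hi} \<Longrightarrow> q\<in>{lo..hi} \<Longrightarrow> p\<noteq>q \<Longrightarrow> u p q \<in> S"
proof -
  have from_lo: "x \<le> hi \<longrightarrow> u lo x \<in> S \<and> u x lo \<in> S" if "Suc lo \<le> x" for x
    using that
  proof (induction x rule: dec_induct)
    case base
    then show ?case using adjacent[of lo] by simp
  next
    case (step x)
    show ?case
    proof
      assume "Suc x \<le> hi"
      then have ih: "u lo x \<in> S" "u x lo \<in> S" and adj: "u x (Suc x) \<in> S" "u (Suc x) x \<in> S"
        using step adjacent[of x] by auto
      have "mbr N (u lo x) (u x (Suc x)) = u lo (Suc x)" "mbr N (u (Suc x) x) (u x lo) = u (Suc x) lo"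
        using step.hyps \<open>Suc x \<le> hi\<close> by (auto intro!: compose)
      then show "u lo (Suc x) \<in> S \<and> u (Suc x) lo \<in> S"
        using br[OF ih(1) adj(1)] br[OF adj(2) ih(2)] by simp
    qed
  qed
  show "p\<in>{lo..hi} \<Longrightarrow> q\<in>{lo..hi} \<Longrightarrow> p\<noteq>q \<Longrightarrow> u p q \<in> S"
    by (rule offdiag_from_hub[where I="{lo..hi}" and h=lo, OF br compose]) (use from_lo in auto)
qed

text \<open>Because a slice is an ideal of its component, one member of a family \<open>u\<close> on which the
  component acts like \<open>gl(I)\<close> on its matrix units (or on its symmetric tensors) already puts
  the whole family into the slice.\<close>

lemma slice_transport:
  fixes u v :: "nat \<Rightarrow> nat \<Rightarrow> cmat"
  assumes v_comp: "\<And>r s. r\<in>I \<Longrightarrow> s\<in>I \<Longrightarrow> r\<noteq>s \<Longrightarrow> v r s \<in> component N G k"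
    and bracket: "\<And>r s p q. r\<in>I \<Longrightarrow> s\<in>I \<Longrightarrow> p\<in>I \<Longrightarrow> q\<in>I \<Longrightarrow> r\<noteq>s \<Longrightarrow> p\<noteq>q \<Longrightarrow>
       mbr N (v r s) (u p q) = madd (if s = p then u r q else mzero) (mscal (-1) (if q = r then u p s else mzero))"
    and third: "\<And>p q. p\<in>I \<Longrightarrow> q\<in>I \<Longrightarrow> \<exists>r\<in>I. r\<noteq>p \<and> r\<noteq>q"
    and seed: "pz\<in>I" "qz\<in>I" "pz\<noteq>qz" "u pz qz \<in> slice N G k"
  shows "p\<in>I \<Longrightarrow> q\<in>I \<Longrightarrow> p\<noteq>q \<Longrightarrow> u p q \<in> slice N G k"
proof -
  have into_qz: "u r qz \<in> slice N G k" if r: "r\<in>I" "r\<noteq>qz" for r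
  proof (cases "r = pz")
    case True then show ?thesis using seed by simp
  next
    case False
    have e: "mbr N (v r pz) (u pz qz) = u r qz"
      using bracket[OF r(1) seed(1) seed(1) seed(2) False seed(3)] r(2) by simp
    have "mbr N (v r pz) (u pz qz) \<in> slice N G k"
      by (rule slice_br_left[OF seed(4) v_comp[OF r(1) seed(1) False]])
    then show ?thesis unfolding e .
  qed
  have off_qz: "u p s \<in> slice N G k" if ps: "p\<in>I" "s\<in>I" "p\<noteq>s" "p\<noteq>qz" for p s
  proof (cases "s = qz")
    case True then show ?thesis using into_qz[OF ps(1) ps(4)] by simp
  next
    case False
    have e: "mbr N (v qz s) (u p qz) = mscal (-1) (u p s)"
      using bracket[OF seed(2) ps(2) ps(1) seed(2) _ ps(4)] False ps(3) by (simp add: eq_commute[of s qz])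
    have "mbr N (v qz s) (u p qz) \<in> slice N G k"
      by (rule slice_br_left[OF into_qz[OF ps(1) ps(4)] v_comp[OF seed(2) ps(2)]]) (use False in simp)
    then have "mscal (-1) (mscal (-1) (u p s)) \<in> slice N G k" unfolding e by (rule slice_scal)
    then show ?thesis by (simp add: mscal_def)
  qed
  assume pq: "p\<in>I" "q\<in>I" "p\<noteq>q"
  show "u p q \<in> slice N G k"
  proof (cases "p = qz")
    case False show ?thesis by (rule off_qz[OF pq False])
  next
    case True
    obtain r where r: "r\<in>I" "r\<noteq>qz" "r\<noteq>q" using third[OF seed(2) pq(2)] by blast
    have e: "mbr N (v qz r) (u r q) = u qz q"
      using bracket[OF seed(2) r(1) r(1) pq(2) _ r(3)] r(2) True pq(3) by (simp add: eq_commute[of r qz])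
    have "mbr N (v qz r) (u r q) \<in> slice N G k"
      by (rule slice_br_left[OF off_qz[OF r(1) pq(2) r(3) r(2)] v_comp[OF seed(2) r(1)]]) (use r in simp)
    then show ?thesis unfolding e using True by simp
  qed
qed

lemma slice_sym_transport:
  fixes w v :: "nat \<Rightarrow> nat \<Rightarrow> cmat"
  assumes v_comp: "\<And>r s. r\<in>I \<Longrightarrow> s\<in>I \<Longrightarrow> r\<noteq>s \<Longrightarrow> v r s \<in> component N G k"
    and bracket: "\<And>r s p q. r\<in>I \<Longrightarrow> s\<in>I \<Longrightarrow> p\<in>I \<Longrightarrow> q\<in>I \<Longrightarrow> r\<noteq>s \<Longrightarrow>
       mbr N (v r s) (w p q) = mscal \<sigma> (madd (if s = p then w r q else mzero) (if s = q then w r p else mzero))"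
    and w_sym: "\<And>p q. w p q = w q p" and \<sigma>_nz: "\<sigma> \<noteq> 0"
    and seed: "pz\<in>I" "qz\<in>I" "pz\<noteq>qz" "w pz qz \<in> slice N G k"
  shows "p\<in>I \<Longrightarrow> q\<in>I \<Longrightarrow> w p q \<in> slice N G k"
proof -
  have into_qz: "w r qz \<in> slice N G k" if r: "r\<in>I" for r
  proof (cases "r = pz")
    case True then show ?thesis using seed by simp
  next
    case False
    have e: "mbr N (v r pz) (w pz qz) = mscal \<sigma> (w r qz)"
      using bracket[OF r(1) seed(1) seed(1) seed(2) False] seed(3) by simp
    have "mbr N (v r pz) (w pz qz) \<in> slice N G k"
      by (rule slice_br_left[OF seed(4) v_comp[OF r(1) seed(1) False]])
    then show ?thesis unfolding e using \<sigma>_nz by (rule slice_scal_inv)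
  qed
  have off_qz: "w p q \<in> slice N G k" if pq: "p\<in>I" "q\<in>I" "p\<noteq>qz" "q\<noteq>qz" for p q
  proof -
    have e: "mbr N (v p qz) (w qz q) = mscal \<sigma> (w p q)"
      using bracket[OF pq(1) seed(2) seed(2) pq(2) pq(3)] pq(4) by simp
    have "w qz q \<in> slice N G k" using into_qz[OF pq(2)] w_sym[of qz q] by simp
    then have "mbr N (v p qz) (w qz q) \<in> slice N G k"
      by (rule slice_br_left[OF _ v_comp[OF pq(1) seed(2) pq(3)]])
    then show ?thesis unfolding e using \<sigma>_nz by (rule slice_scal_inv)
  qed
  assume pq: "p\<in>I" "q\<in>I"
  show "w p q \<in> slice N G k"
  proof (cases "q = qz")
    case True then show ?thesis using into_qz[OF pq(1)] by simp
  next
    case False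
    show ?thesis
    proof (cases "p = qz")
      case True then show ?thesis using into_qz[OF pq(2)] w_sym[of p q] by simp
    next
      case F2: False
      show ?thesis by (rule off_qz[OF pq F2 False])
    qed
  qed
qed

lemma exists_third:
  fixes n p q :: nat
  assumes "3 \<le> n"
  shows "\<exists>r\<in>{1..n}. r \<noteq> p \<and> r \<noteq> q"
proof -
  have "{1, 2, 3} \<subseteq> {1..n}" using assms by auto
  moreover have "\<exists>r\<in>{1, 2, 3::nat}. r \<noteq> p \<and> r \<noteq> q" by auto
  ultimately show ?thesis by blast
qed

locale psi_setting =
  fixes n K :: nat and a :: "nat \<Rightarrow> complex"
  assumes n_ge_3: "n \<ge> 3" and K_pos: "K \<ge> 1" and a_nonzero: "\<forall>k\<in>{1..K}. a k \<noteq> 0"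
    and a_distinct: "\<forall>k\<in>{1..K}. \<forall>j\<in>{1..K}. k \<noteq> j \<longrightarrow> a k \<noteq> a j \<and> a k \<noteq> inverse (a j)"
    and a_1: "a 1 = 1" and a_not_minus_1: "\<forall>k\<in>{2..K}. a k \<noteq> -1"
begin

definition gens :: "cmats set" where
  "gens = (\<Union>i\<in>{1..n}. {psiv_e n K a i, psiv_f n K a i,
                         vbr (2*n) (psiv_e n K a i) (psiv_f n K a i)})"

lemma psi_image_gens: "psi_image n K a = lie_gen (2*n) gens"
  by (simp add: psi_image_def gens_def)

lemma psiv_e_gens: "i \<in> {1..n} \<Longrightarrow> psiv_e n K a i \<in> gens"
  unfolding gens_def by blast

lemma psiv_f_gens: "i \<in> {1..n} \<Longrightarrow> psiv_f n K a i \<in> gens"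
  unfolding gens_def by blast

lemma psi_e_component: "i \<in> {1..n} \<Longrightarrow> k \<in> {1..K} \<Longrightarrow> psi_e n (a k) i \<in> component (2*n) gens k"
  using component_gen[OF psiv_e_gens, of i k] by (simp add: psiv_e_def)

lemma psi_f_component: "i \<in> {1..n} \<Longrightarrow> k \<in> {1..K} \<Longrightarrow> psi_f n (a k) i \<in> component (2*n) gens k"
  using component_gen[OF psiv_f_gens, of i k] by (simp add: psiv_f_def)

lemma Egl_adjacent_diagonal:
  assumes "1 \<le> i" "i < n"
  shows "Egl n i (Suc i) \<in> diagonal (2*n) K gens \<and> Egl n (Suc i) i \<in> diagonal (2*n) K gens"
proof -
  have "copies K (\<lambda>_. 1) (Egl n i (Suc i)) = psiv_e n K a i"
    "copies K (\<lambda>_. 1) (Egl n (Suc i) i) = psiv_f n K a i"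
    using assms by (auto simp: copies_1 psiv_e_def psiv_f_def psi_e_lt psi_f_lt mzero_def)
  moreover have "psiv_e n K a i \<in> lie_gen (2*n) gens" "psiv_f n K a i \<in> lie_gen (2*n) gens"
    using assms by (auto intro!: lie_gen.gen psiv_e_gens psiv_f_gens)
  ultimately show ?thesis by (simp add: diagonal_def)
qed

lemma Egl_diagonal: "p \<in> {1..n} \<Longrightarrow> q \<in> {1..n} \<Longrightarrow> p \<noteq> q \<Longrightarrow> Egl n p q \<in> diagonal (2*n) K gens"
  by (rule offdiag_from_adjacent[where N="2*n", OF diagonal_br])
    (use Egl_adjacent_diagonal in \<open>auto simp: mbr_Egl_Egl\<close>)

lemma Egl_component:
  "p \<in> {1..n} \<Longrightarrow> q \<in> {1..n} \<Longrightarrow> p \<noteq> q \<Longrightarrow> k \<in> {1..K} \<Longrightarrow> Egl n p q \<in> component (2*n) gens k"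
  using diagonal_component[OF Egl_diagonal] by simp

subsection \<open>Separating the components\<close>

definition eig :: "nat \<Rightarrow> complex" where
  "eig k = (1 + inverse (a k)) * (-(1 + a k))"

lemma eig_inj: "k \<in> {1..K} \<Longrightarrow> j \<in> {1..K} \<Longrightarrow> eig k = eig j \<Longrightarrow> k = j"
proof (rule ccontr)
  assume h: "k \<in> {1..K}" "j \<in> {1..K}" "eig k = eig j" "k \<noteq> j"
  have "(1 + inverse (a i)) * (1 + a i) = - eig i" for i
    by (simp add: eig_def algebra_simps)
  then have "(1 + inverse (a k)) * (1 + a k) = (1 + inverse (a j)) * (1 + a j)"
    using h(3) by simp
  then have "a k = a j \<or> a k = inverse (a j)" using add_inverse_eq_cases a_nonzero h by auto
  then show False using a_distinct h by auto
qed

lemma bracket_copies_Hdiff: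
  "vbr (2*n) (vbr (2*n) (copies K (\<lambda>_. 1) (Egl n 1 n)) (psiv_e n K a n))
     (vbr (2*n) (copies K (\<lambda>_. 1) (Egl n n 1)) (psiv_f n K a n)) = copies K eig (Hdiff n)"
proof (intro ext)
  fix k i j
  show "vbr (2*n) (vbr (2*n) (copies K (\<lambda>_. 1) (Egl n 1 n)) (psiv_e n K a n))
     (vbr (2*n) (copies K (\<lambda>_. 1) (Egl n n 1)) (psiv_f n K a n)) k i j = copies K eig (Hdiff n) k i j"
  proof (cases "1 \<le> k \<and> k \<le> K")
    case True
    then have k: "copies K (\<lambda>_. 1) (Egl n 1 n) k = Egl n 1 n" "copies K (\<lambda>_. 1) (Egl n n 1) k = Egl n n 1"
      "psiv_e n K a n k = psi_e n (a k) n" "psiv_f n K a n k = psi_f n (a k) n"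
      "copies K eig (Hdiff n) k = mscal (eig k) (Hdiff n)"
      by (simp_all add: copies_1 psiv_e_def psiv_f_def copies_def)
    show ?thesis
      unfolding vbr_apply k mbr_Egl_1n_psi_e_n[OF n_ge_3] mbr_Egl_n1_psi_f_n[OF n_ge_3]
        mbr_mscal_left mbr_mscal_right mbr_Eu_Eu_Hdiff[OF n_ge_3]
      by (simp add: eig_def mscal_def)
  next
    case False
    then have z: "copies K (\<lambda>_. 1) (Egl n 1 n) k = mzero" "copies K (\<lambda>_. 1) (Egl n n 1) k = mzero"
      "copies K eig (Hdiff n) k = mzero"
      by (auto simp: copies_def)
    show ?thesis unfolding vbr_apply z mbr_zero_left by (simp add: mzero_def)
  qed
qed

lemma copies_Hdiff_lie_gen: "copies K eig (Hdiff n) \<in> lie_gen (2*n) gens"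
proof -
  have "copies K (\<lambda>_. 1) (Egl n 1 n) \<in> lie_gen (2*n) gens" "copies K (\<lambda>_. 1) (Egl n n 1) \<in> lie_gen (2*n) gens"
    using Egl_diagonal[of 1 n] Egl_diagonal[of n 1] n_ge_3 by (auto simp: diagonal_def)
  moreover have "psiv_e n K a n \<in> lie_gen (2*n) gens" "psiv_f n K a n \<in> lie_gen (2*n) gens"
    using n_ge_3 by (auto intro!: lie_gen.gen psiv_e_gens psiv_f_gens)
  ultimately show ?thesis unfolding bracket_copies_Hdiff[symmetric] by (intro lie_gen.br)
qed

lemma copies_Egl_12_step:
  assumes "copies K \<psi> (Egl n 1 2) \<in> lie_gen (2*n) gens"
  shows "copies K (\<lambda>k. (eig k - c) * \<psi> k) (Egl n 1 2) \<in> lie_gen (2*n) gens"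
proof -
  have "vadd (vbr (2*n) (copies K eig (Hdiff n)) (copies K \<psi> (Egl n 1 2)))
      (vscal (-c) (copies K \<psi> (Egl n 1 2))) \<in> lie_gen (2*n) gens"
    using assms copies_Hdiff_lie_gen by (intro lie_gen.add lie_gen.br lie_gen.scal)
  moreover have "vadd (vbr (2*n) (copies K eig (Hdiff n)) (copies K \<psi> (Egl n 1 2)))
      (vscal (-c) (copies K \<psi> (Egl n 1 2))) = copies K (\<lambda>k. (eig k - c) * \<psi> k) (Egl n 1 2)"
    unfolding vbr_copies mbr_Hdiff_Egl_12[OF n_ge_3] vscal_copies vadd_copies
    by (simp add: algebra_simps)
  ultimately show ?thesis by simp
qed

lemma copies_Egl_12_prod:
  "finite J \<Longrightarrow> copies K (\<lambda>k. \<Prod>j\<in>J. eig k - eig j) (Egl n 1 2) \<in> lie_gen (2*n) gens"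
proof (induction J rule: finite_induct)
  case empty
  then show ?case using Egl_diagonal[of 1 2] n_ge_3 by (simp add: diagonal_def)
next
  case (insert x F)
  then show ?case using copies_Egl_12_step[OF insert.IH, of "eig x"] by simp
qed

text \<open>Lagrange interpolation in the adjoint action of \<open>copies K eig (Hdiff n)\<close>: the coefficient
  \<open>\<Prod>j\<in>J. eig k - eig j\<close> vanishes in every component \<open>k \<noteq> k0\<close>, and not in \<open>k0\<close> since the
  \<open>eig k\<close> are distinct.\<close>

lemma Egl_12_slice:
  assumes k0: "k0 \<in> {1..K}"
  shows "Egl n 1 2 \<in> slice (2*n) gens k0"
proof -
  define J where "J = {1..K} - {k0}"
  define P where "P = (\<Prod>j\<in>J. eig k0 - eig j)"
  have "P \<noteq> 0" unfolding P_def J_def using eig_inj k0 by auto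
  have "copies K (\<lambda>k. \<Prod>j\<in>J. eig k - eig j) (Egl n 1 2) = single k0 (mscal P (Egl n 1 2))"
  proof (rule ext)
    fix k
    consider "k = k0" | "k \<in> J" | "k \<notin> {1..K}" unfolding J_def by blast
    then show "copies K (\<lambda>k. \<Prod>j\<in>J. eig k - eig j) (Egl n 1 2) k = single k0 (mscal P (Egl n 1 2)) k"
    proof cases
      case 1
      then show ?thesis using k0 by (simp add: copies_def single_def P_def)
    next
      case 2
      then have "(\<Prod>j\<in>J. eig k - eig j) = 0" "1 \<le> k \<and> k \<le> K" "k \<noteq> k0"
        by (auto simp: J_def intro!: prod_zero)
      then show ?thesis by (simp add: copies_def single_def mscal_def mzero_def)
    next
      case 3
      then show ?thesis using k0 by (auto simp: copies_def single_def)
    qed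
  qed
  then have "mscal P (Egl n 1 2) \<in> slice (2*n) gens k0"
    using copies_Egl_12_prod[of J] by (simp add: slice_def J_def)
  then show ?thesis using \<open>P \<noteq> 0\<close> by (rule slice_scal_inv)
qed

lemma Egl_slice:
  assumes k: "k \<in> {1..K}"
  shows "p \<in> {1..n} \<Longrightarrow> q \<in> {1..n} \<Longrightarrow> p \<noteq> q \<Longrightarrow> Egl n p q \<in> slice (2*n) gens k"
proof (rule slice_transport[where I="{1..n}" and u="Egl n" and v="Egl n" and pz=1 and qz=2])
  show "\<And>r s. r \<in> {1..n} \<Longrightarrow> s \<in> {1..n} \<Longrightarrow> r \<noteq> s \<Longrightarrow> Egl n r s \<in> component (2*n) gens k"
    using Egl_component k by blast
  show "\<And>p q. \<exists>r\<in>{1..n}. r \<noteq> p \<and> r \<noteq> q"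
    using n_ge_3 by (rule exists_third)
  show "Egl n 1 2 \<in> slice (2*n) gens k" by (rule Egl_12_slice[OF k])
qed (use n_ge_3 in \<open>auto simp: mbr_Egl_Egl\<close>)

subsection \<open>The components k \<ge> 2 are sl(2n)\<close>

text \<open>Bracketing with \<open>Egl n 3 1\<close>, \<open>Egl n 1 2\<close> and \<open>Egl n 2 3\<close> carries
  \<open>E(2,n+1) + c E(1,n+2)\<close> around the cycle (1 2 3) of indices to \<open>E(1,n+2) + c E(2,n+1)\<close>;
  subtracting \<open>c\<close> times the latter leaves \<open>(1 - c\<^sup>2) E(2,n+1)\<close>.\<close>

lemma Eu_2_n1_slice:
  assumes k: "k \<in> {2..K}"
  shows "Eu 2 (n+1) \<in> slice (2*n) gens k"
proof -
  have k1: "k \<in> {1..K}" using k by auto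
  define c where "c = inverse (a k)"
  have "1 \<in> {1..K}" using K_pos by simp
  then have ak: "a k \<noteq> 1" "a k \<noteq> -1"
    using a_distinct k1 k a_1 a_not_minus_1 by fastforce+
  have c2: "1 - c * c \<noteq> 0"
  proof
    assume "1 - c * c = 0"
    then have "(1 - c) * (1 + c) = 0" by (simp add: algebra_simps)
    then have "c = 1 \<or> c = -1" by (auto simp: add_eq_0_iff)
    moreover have "a k = inverse c" by (simp add: c_def)
    ultimately show False using ak by auto
  qed
  have idx: "(1::nat) \<in> {1..n}" "(2::nat) \<in> {1..n}" "(3::nat) \<in> {1..n}" "n \<in> {1..n}"
    using n_ge_3 by auto
  note EC = Egl_component[OF _ _ _ k1]
  have P: "madd (Eu 2 (n+1)) (mscal c (Eu 1 (n+2))) \<in> slice (2*n) gens k"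
    using slice_br_right[OF Egl_slice[OF k1 idx(2) idx(4)] psi_e_component[OF idx(4) k1]] n_ge_3
    unfolding mbr_Egl_2n_psi_e_n[OF n_ge_3] c_def by simp
  have Q1: "madd (Eu 2 (n+3)) (mscal c (Eu 3 (n+2))) \<in> slice (2*n) gens k"
    using slice_br_left[OF P EC[OF idx(3) idx(1)]] unfolding mbr_Egl_31_upper[OF n_ge_3] by simp
  have Q2: "madd (Eu 1 (n+3)) (mscal c (Eu 3 (n+1))) \<in> slice (2*n) gens k"
    using slice_br_left[OF Q1 EC[OF idx(1) idx(2)]] unfolding mbr_Egl_12_upper[OF n_ge_3] by simp
  have Q: "madd (Eu 1 (n+2)) (mscal c (Eu 2 (n+1))) \<in> slice (2*n) gens k"
    using slice_br_left[OF Q2 EC[OF idx(2) idx(3)]] unfolding mbr_Egl_23_upper[OF n_ge_3] by simp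
  have "mscal (1 - c * c) (Eu 2 (n+1)) \<in> slice (2*n) gens k"
    using slice_add[OF P slice_scal[OF Q, of "-c"]] unfolding upper_pair_combination .
  then show ?thesis using c2 by (rule slice_scal_inv)
qed

lemma Eu_upper_left_slice:
  assumes k: "k \<in> {2..K}"
  shows "p \<in> {1..n} \<Longrightarrow> q \<in> {1..n} \<Longrightarrow> p \<noteq> q \<Longrightarrow> Eu p q \<in> slice (2*n) gens k"
proof (rule slice_transport[where I="{1..n}" and u=Eu and v="Egl n" and pz=2 and qz=n])
  have k1: "k \<in> {1..K}" using k by auto
  then show "\<And>r s. r \<in> {1..n} \<Longrightarrow> s \<in> {1..n} \<Longrightarrow> r \<noteq> s \<Longrightarrow> Egl n r s \<in> component (2*n) gens k"
    using Egl_component by blast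
  show "\<And>p q. \<exists>r\<in>{1..n}. r \<noteq> p \<and> r \<noteq> q"
    using n_ge_3 by (rule exists_third)
  show "Eu 2 n \<in> slice (2*n) gens k"
    using slice_br_right[OF Eu_2_n1_slice[OF k] psi_f_component[of n k]] k1 n_ge_3
    unfolding mbr_Eu_2n1_psi_f_n[OF n_ge_3] by simp
qed (use n_ge_3 in \<open>auto simp: mbr_Egl_Eu\<close>)

lemma Eu_upper_right_slice:
  assumes k: "k \<in> {2..K}" and r: "r \<in> {1..n}"
  shows "Eu 1 (n+r) \<in> slice (2*n) gens k"
proof -
  have k1: "k \<in> {1..K}" using k by auto
  have idx: "(1::nat) \<in> {1..n}" "(2::nat) \<in> {1..n}" using n_ge_3 by auto
  have "Eu 2 (n+r) \<in> slice (2*n) gens k"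
  proof (cases "r = 1")
    case True
    then show ?thesis using Eu_2_n1_slice[OF k] by simp
  next
    case False
    have "mbr (2*n) (Egl n r 1) (Eu 2 (n+1)) = Eu 2 (n+r)"
      using mbr_Egl_Eu_upper[OF r idx(1) idx(2) idx(1)] by simp
    then show ?thesis
      using slice_br_left[OF Eu_2_n1_slice[OF k] Egl_component[OF r idx(1) False k1]] by simp
  qed
  moreover have "mbr (2*n) (Eu 1 2) (Eu 2 (n+r)) = Eu 1 (n+r)"
    using mbr_Eu_Eu[of 1 "2*n" 2 2 "n+r"] r n_ge_3 by simp
  ultimately show ?thesis
    using slice_br[OF Eu_upper_left_slice[OF k idx(1) idx(2)]] by fastforce
qed

lemma Eu_lower_left_slice:
  assumes k: "k \<in> {2..K}" and s: "s \<in> {1..n}"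
  shows "Eu (n+s) 1 \<in> slice (2*n) gens k"
proof -
  have k1: "k \<in> {1..K}" using k by auto
  have idx: "(1::nat) \<in> {1..n}" "(2::nat) \<in> {1..n}" "n \<in> {1..n}" using n_ge_3 by auto
  have En1: "Eu (n+1) 2 \<in> slice (2*n) gens k"
    using slice_br_left[OF Eu_upper_left_slice[OF k idx(3) idx(2)] psi_f_component[of n k]] k1 n_ge_3
    unfolding mbr_psi_f_n_Eu_n2[OF n_ge_3] by simp
  have "Eu (n+s) 2 \<in> slice (2*n) gens k"
  proof (cases "s = 1")
    case True
    then show ?thesis using En1 by simp
  next
    case False
    have "mbr (2*n) (Egl n 1 s) (Eu (n+1) 2) = mscal (-1) (Eu (n+s) 2)"
      using mbr_Egl_Eu_lower[OF idx(1) s idx(1) idx(2)] by simp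
    then have "mscal (-1) (Eu (n+s) 2) \<in> slice (2*n) gens k"
      using slice_br_left[OF En1 Egl_component[OF idx(1) s _ k1]] False by simp
    then show ?thesis by (rule slice_scal_inv) simp
  qed
  moreover have "mbr (2*n) (Eu (n+s) 2) (Eu 2 1) = Eu (n+s) 1"
    using mbr_Eu_Eu[of "n+s" "2*n" 2 2 1] s n_ge_3 by simp
  ultimately show ?thesis
    using slice_br[OF _ Eu_upper_left_slice[OF k idx(2) idx(1)]] by fastforce
qed

lemma Eu_slice:
  assumes k: "k \<in> {2..K}"
  shows "p \<in> {1..2*n} \<Longrightarrow> q \<in> {1..2*n} \<Longrightarrow> p \<noteq> q \<Longrightarrow> Eu p q \<in> slice (2*n) gens k"
proof (rule offdiag_from_hub[where I="{1..2*n}" and h=1, OF slice_br])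
  show "mbr (2*n) (Eu p q) (Eu q r) = Eu p r"
    if "p \<in> {1..2*n}" "q \<in> {1..2*n}" "r \<in> {1..2*n}" "p \<noteq> q" "q \<noteq> r" "p \<noteq> r" for p q r
    using that by (simp add: mbr_Eu_Eu)
  show "Eu 1 x \<in> slice (2*n) gens k \<and> Eu x 1 \<in> slice (2*n) gens k"
    if "x \<in> {1..2*n}" "x \<noteq> 1" for x
  proof (cases "x \<le> n")
    case True
    then show ?thesis using Eu_upper_left_slice[OF k] that by auto
  next
    case False
    have r: "x - n \<in> {1..n}" "n + (x - n) = x" using that False by auto
    show ?thesis
      using Eu_upper_right_slice[OF k r(1)] Eu_lower_left_slice[OF k r(1)] unfolding r(2) by simp
  qed
qed (use n_ge_3 in auto)

lemma diag_slice:
  assumes k: "k \<in> {2..K}" and p: "p \<in> {1..2*n}"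
  shows "madd (Eu p p) (mscal (-1) (Eu (2*n) (2*n))) \<in> slice (2*n) gens k"
proof (cases "p = 2*n")
  case True
  then have "madd (Eu p p) (mscal (-1) (Eu (2*n) (2*n))) = mzero"
    by (auto simp: madd_def mscal_def mzero_def Eu_def intro!: ext)
  then show ?thesis using slice_zero by simp
next
  case False
  have idx: "2*n \<in> {1..2*n}" using n_ge_3 by auto
  have "mbr (2*n) (Eu p (2*n)) (Eu (2*n) p) = madd (Eu p p) (mscal (-1) (Eu (2*n) (2*n)))"
    using mbr_Eu_Eu[OF p idx idx p] by simp
  moreover have "mbr (2*n) (Eu p (2*n)) (Eu (2*n) p) \<in> slice (2*n) gens k"
    using Eu_slice[OF k] p idx False by (intro slice_br) auto
  ultimately show ?thesis by simp
qed

lemma sl_slice: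
  assumes k: "k \<in> {2..K}" and M: "is_sl (2*n) M"
  shows "M \<in> slice (2*n) gens k"
proof -
  let ?O = "{x\<in>{1..2*n}\<times>{1..2*n}. fst x \<noteq> snd x}"
  have "finite ?O" by (rule finite_subset[of _ "{1..2*n}\<times>{1..2*n}"]) auto
  then have "msum (\<lambda>x. mscal (M (fst x) (snd x)) (Eu (fst x) (snd x))) ?O \<in> slice (2*n) gens k"
    by (rule slice_msum) (auto intro!: slice_scal Eu_slice[OF k])
  moreover have "msum (\<lambda>p. mscal (M p p) (madd (Eu p p) (mscal (-1) (Eu (2*n) (2*n))))) {1..2*n}
      \<in> slice (2*n) gens k"
    by (rule slice_msum) (auto intro!: slice_scal diag_slice[OF k])
  ultimately show ?thesis by (subst sl_expansion[OF M]) (rule slice_add)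
qed

subsection \<open>The first component is sp(2n)\<close>

lemma Eup_Elow_slice:
  assumes p: "p \<in> {1..n}" and q: "q \<in> {1..n}"
  shows "Eup n p q \<in> slice (2*n) gens 1" "Elow n p q \<in> slice (2*n) gens 1"
proof -
  have k1: "(1::nat) \<in> {1..K}" using K_pos by simp
  note EC = Egl_component[OF _ _ _ k1]
  have idx: "(2::nat) \<in> {1..n}" "(1::nat) \<in> {1..n}" "n \<in> {1..n}" using n_ge_3 by auto
  have gen: "psi_e n 1 n \<in> component (2*n) gens 1" "psi_f n 1 n \<in> component (2*n) gens 1"
    using psi_e_component[of n 1] psi_f_component[of n 1] k1 n_ge_3 a_1 by auto
  have Eup21: "Eup n 2 1 \<in> slice (2*n) gens 1"
    using slice_br_right[OF Egl_slice[OF k1 idx(1) idx(3)] gen(1)] n_ge_3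
    unfolding mbr_Egl_2n_psi_e1_n[OF n_ge_3] by simp
  have "mscal (-1) (Elow n 2 1) \<in> slice (2*n) gens 1"
    using slice_br_right[OF Egl_slice[OF k1 idx(3) idx(1)] gen(2)] n_ge_3
    unfolding mbr_Egl_n2_psi_f1_n[OF n_ge_3] by simp
  then have Elow21: "Elow n 2 1 \<in> slice (2*n) gens 1" by (rule slice_scal_inv) simp
  show "Eup n p q \<in> slice (2*n) gens 1"
  proof (rule slice_sym_transport[where I="{1..n}" and w="Eup n" and v="Egl n" and pz=2 and qz=1 and \<sigma>=1])
    show "\<And>r s. r \<in> {1..n} \<Longrightarrow> s \<in> {1..n} \<Longrightarrow> r \<noteq> s \<Longrightarrow> Egl n r s \<in> component (2*n) gens 1"
      using EC by blast
    show "\<And>r s p q. r \<in> {1..n} \<Longrightarrow> s \<in> {1..n} \<Longrightarrow> p \<in> {1..n} \<Longrightarrow> q \<in> {1..n} \<Longrightarrow> r \<noteq> s \<Longrightarrow>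
        mbr (2*n) (Egl n r s) (Eup n p q) =
        mscal 1 (madd (if s = p then Eup n r q else mzero) (if s = q then Eup n r p else mzero))"
      by (simp add: mbr_Egl_Eup mscal_def)
  qed (use idx Eup21 p q Eup_sym in auto)
  show "Elow n p q \<in> slice (2*n) gens 1"
  proof (rule slice_sym_transport[where I="{1..n}" and w="Elow n" and v="\<lambda>r s. Egl n s r"
        and pz=2 and qz=1 and \<sigma>="-1"])
    show "\<And>r s. r \<in> {1..n} \<Longrightarrow> s \<in> {1..n} \<Longrightarrow> r \<noteq> s \<Longrightarrow> Egl n s r \<in> component (2*n) gens 1"
      using EC by metis
    show "\<And>r s p q. r \<in> {1..n} \<Longrightarrow> s \<in> {1..n} \<Longrightarrow> p \<in> {1..n} \<Longrightarrow> q \<in> {1..n} \<Longrightarrow> r \<noteq> s \<Longrightarrow>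
        mbr (2*n) (Egl n s r) (Elow n p q) =
        mscal (-1) (madd (if s = p then Elow n r q else mzero) (if s = q then Elow n r p else mzero))"
      by (rule mbr_Egl_Elow)
  qed (use idx Elow21 p q Elow_sym in auto)
qed

lemma Egl_slice_1:
  assumes p: "p \<in> {1..n}" and q: "q \<in> {1..n}"
  shows "Egl n p q \<in> slice (2*n) gens 1"
proof (cases "p = q")
  case False
  then show ?thesis using Egl_slice K_pos p q by simp
next
  case True
  have "mscal 4 (Egl n p p) \<in> slice (2*n) gens 1"
    using slice_br[OF Eup_Elow_slice[OF p p]] mbr_Eup_Elow_diag[OF p] by metis
  then have "Egl n p p \<in> slice (2*n) gens 1" by (rule slice_scal_inv) simp
  then show ?thesis using True by simp
qed

lemma Esp_slice:
  assumes p: "p \<in> {1..2*n}" and q: "q \<in> {1..2*n}"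
  shows "Esp n p q \<in> slice (2*n) gens 1"
proof -
  consider "p \<le> n" "q \<le> n" | "p \<le> n" "n < q" | "n < p" "q \<le> n" | "n < p" "n < q" by linarith
  then show ?thesis
  proof cases
    case 1
    then show ?thesis using Egl_slice_1[of p q] p q by (simp add: Esp_upper_left)
  next
    case 2
    moreover have "p \<in> {1..n}" "q - n \<in> {1..n}" using 2 p q by auto
    ultimately show ?thesis using Eup_Elow_slice(1) by (simp add: Esp_upper_right)
  next
    case 3
    moreover have "p - n \<in> {1..n}" "q \<in> {1..n}" using 3 p q by auto
    ultimately show ?thesis using Eup_Elow_slice(2) by (simp add: Esp_lower_left)
  next
    case 4
    moreover have "q - n \<in> {1..n}" "p - n \<in> {1..n}" using 4 p q by auto
    ultimately show ?thesis using slice_scal[OF Egl_slice_1] by (simp add: Esp_lower_right)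
  qed
qed

lemma sp_slice:
  assumes "is_sp n M"
  shows "M \<in> slice (2*n) gens 1"
proof -
  have "msum (\<lambda>x. mscal (M (fst x) (snd x)) (Esp n (fst x) (snd x))) ({1..2*n} \<times> {1..2*n})
      \<in> slice (2*n) gens 1"
  proof (rule slice_msum)
    show "mscal (M (fst x) (snd x)) (Esp n (fst x) (snd x)) \<in> slice (2*n) gens 1"
      if "x \<in> {1..2*n} \<times> {1..2*n}" for x
      using that by (intro slice_scal Esp_slice) auto
  qed simp
  then show ?thesis by (subst sp_expansion[OF assms]) (rule slice_scal)
qed

lemma sp_sl_sum_subset_lie_gen: "sp_sl_sum n K \<subseteq> lie_gen (2*n) gens"
proof
  fix X assume X: "X \<in> sp_sl_sum n K"
  show "X \<in> lie_gen (2*n) gens"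
  proof (rule lie_gen_of_slices[of "{1..K}"])
    show "X k = mzero" if "k \<notin> {1..K}" for k
      using X that by (simp add: sp_sl_sum_def mzero_def)
    show "X k \<in> slice (2*n) gens k" if k: "k \<in> {1..K}" for k
    proof (cases "k = 1")
      case True
      then show ?thesis using X sp_slice by (simp add: sp_sl_sum_def)
    next
      case False
      then have "k \<in> {2..K}" using k by auto
      then show ?thesis using X sl_slice by (simp add: sp_sl_sum_def)
    qed
  qed simp
qed

lemma gens_subset_sp_sl_sum: "gens \<subseteq> sp_sl_sum n K"
proof -
  have "psiv_e n K a i \<in> sp_sl_sum n K \<and> psiv_f n K a i \<in> sp_sl_sum n K" if i: "i \<in> {1..n}" for i
    using K_pos a_1 psi_e_sp[OF i] psi_f_sp[OF i] psi_e_sl[OF i] psi_f_sl[OF i]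
    by (auto simp: sp_sl_sum_def psiv_e_def psiv_f_def)
  then show ?thesis unfolding gens_def using sp_sl_sum_vbr by blast
qed

lemma psi_image_eq_sp_sl_sum: "psi_image n K a = sp_sl_sum n K"
  unfolding psi_image_gens
  using lie_gen_least[OF gens_subset_sp_sl_sum sp_sl_sum_zero sp_sl_sum_vadd sp_sl_sum_vscal sp_sl_sum_vbr]
    sp_sl_sum_subset_lie_gen
  by blast

end

theorem lemma5p2:
  fixes n K :: nat and a :: "nat \<Rightarrow> complex"
  assumes "n \<ge> 3" and "K \<ge> 1"
    and "\<forall>k\<in>{1..K}. a k \<noteq> 0"
    and "\<forall>k\<in>{1..K}. \<forall>j\<in>{1..K}. k \<noteq> j \<longrightarrow> a k \<noteq> a j \<and> a k \<noteq> inverse (a j)"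
    and "a 1 = 1"
    and "\<forall>k\<in>{2..K}. a k \<noteq> -1"
  shows "\<exists>f. lie_iso (2*n) (psi_image n K a) (sp_sl_sum n K) f"
proof -
  interpret psi_setting n K a using assms by unfold_locales
  have "lie_iso (2*n) (psi_image n K a) (sp_sl_sum n K) id"
    unfolding lie_iso_def psi_image_eq_sp_sl_sum by (simp add: bij_betw_def)
  then show ?thesis by blast
qed

end
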